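(* Let $(\mathcal{N},r)$ be a ranked $X$-cactus. Then $\mathcal{S}_i(\mathcal{N})\prec\mathcal{S}_j(\mathcal{N})$ for all $0\le i<j\le\sigma(r)$, and $\mathcal{S}_{\sigma(r)}(\mathcal{N})=\{(X,\emptyset)\}$.
   Context: Let $X$ be a finite non-empty set. A rooted DAG $N=(V,A)$ is a finite directed acyclic graph with a vertex $\rho$ of indegree $0$ (the root) from which every vertex is reachable. Leaf: outdegree $0$; tree vertex: indegree $\le1$; reticulation vertex: indegree $\ge 2$; if $(u,v)\in A$, $u$ is a parent of $v$ and $v$ a child of $u$. A reticulation cycle consists of two distinct directed paths with the same start and end vertex and no other common vertices. A rooted $X$-cactus $\mathcal{N}=(N,\varphi)$ is a rooted DAG with $\varphi:X\to V$ such that every vertex has indegree $\le2$, no two distinct reticulation cycles share an arc, and $\varphi(X)$ contains all leaves and all tree vertices of outdegree $1$. A time-stamp function is $t:V\to\mathbb{R}_{\ge0}$ with $t(v)=0$ for $v\in\varphi(X)$; $t(u)>t(v)$ for every arc $(u,v)$ with $v$ not a reticulation vertex; $t(v)=t(p_1)=t(p_2)$ for each reticulation vertex $v$ with parents $p_1,p_2$. $\mathcal{N}$ is temporal if one exists; its size is $\sigma(t)=|t(V)|-1$. A ranking is a time-stamp function $r$ with $r(V)=\{0,\dots,\sigma(r)\}$; a ranked $X$-cactus is a rooted temporal $X$-cactus with a ranking. A vertex $u$ is a descendant of $v$ if some directed path from the root to $u$ contains $v$; strict if every such path contains $v$, non-strict otherwise. $S(u)=\{x:\varphi(x)$ strict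 descendant of $u\}$, $H(u)=\{x:\varphi(x)$ non-strict descendant of $u\}$. For $0\le i\le\sigma(r)$, $V_i=\{u\in V: r(u)\le i$ and $r(p)>i$ for all parents $p$ of $u\}$ and $\mathcal{S}_i(\mathcal{N})=\{(S(u),H(u)):u\in V_i\}\cup\{(H(u),\emptyset):u\in V_i, H(u)\ne\emptyset\}$. A set pair system on $X$ is a set of ordered pairs $(S,H)$ of subsets of $X$ with $S\ne\emptyset$ and $S\cap H=\emptyset$. On set pairs, $(S_1,H_1)\le(S_2,H_2)$ iff they are equal or one of: $S_1\cup H_1\subseteq S_2$; $S_1\cup H_1\subseteq H_2$; $S_1\subsetneq S_2$ and $H_1=H_2\ne\emptyset$. For set pair systems, $\mathcal{S}_1\preceq\mathcal{S}_2$ iff (SP1) for every $(S_1,H_1)\in\mathcal{S}_1$ there is $(S_2,H_2)\in\mathcal{S}_2$ with $(S_1,H_1)\le(S_2,H_2)$, and (SP2) for every $(S_2,H_2)\in\mathcal{S}_2$ with $H_2\ne\emptyset$, if some $(S_1,H_1)\in\mathcal{S}_1$ has $H_1=H_2$, then some such $(S_1,H_1)$ satisfies $(S_1,H_1)\le(S_2,H_2)$. $\mathcal{S}_1\prec\mathcal{S}_2$ means $\mathcal{S}_1\preceq\mathcal{S}_2$ and $\mathcal{S}_1\ne\mathcal{S}_2$. *)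

theory Defs
  imports Complex_Main
begin

definition parents :: "('v \<times> 'v) set \<Rightarrow> 'v \<Rightarrow> 'v set" where
  "parents A v = {u. (u, v) \<in> A}"

definition children :: "('v \<times> 'v) set \<Rightarrow> 'v \<Rightarrow> 'v set" where
  "children A u = {v. (u, v) \<in> A}"

definition indeg :: "('v \<times> 'v) set \<Rightarrow> 'v \<Rightarrow> nat" where
  "indeg A v = card (parents A v)"

definition outdeg :: "('v \<times> 'v) set \<Rightarrow> 'v \<Rightarrow> nat" where
  "outdeg A u = card (children A u)"

definition is_leaf :: "('v \<times> 'v) set \<Rightarrow> 'v \<Rightarrow> bool" where
  "is_leaf A v \<longleftrightarrow> outdeg A v = 0"

definition is_tree_vertex :: "('v \<times> 'v) set \<Rightarrow> 'v \<Rightarrow> bool" where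
  "is_tree_vertex A v \<longleftrightarrow> indeg A v \<le> 1"

definition is_reticulation :: "('v \<times> 'v) set \<Rightarrow> 'v \<Rightarrow> bool" where
  "is_reticulation A v \<longleftrightarrow> indeg A v \<ge> 2"

definition dpath :: "'v set \<Rightarrow> ('v \<times> 'v) set \<Rightarrow> 'v list \<Rightarrow> bool" where
  "dpath V A p \<longleftrightarrow> p \<noteq> [] \<and> set p \<subseteq> V \<and> (\<forall>i. Suc i < length p \<longrightarrow> (p ! i, p ! Suc i) \<in> A)"

definition path_arcs :: "'v list \<Rightarrow> ('v \<times> 'v) set" where
  "path_arcs p = set (zip p (tl p))"

definition rooted_dag :: "'v set \<Rightarrow> ('v \<times> 'v) set \<Rightarrow> 'v \<Rightarrow> bool" where
  "rooted_dag V A \<rho> \<longleftrightarrow> finite V \<and> A \<subseteq> V \<times> V \<and> acyclic A \<and> \<rho> \<in> V \<and>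
     indeg A \<rho> = 0 \<and> (\<forall>v\<in>V. (\<rho>, v) \<in> A\<^sup>*)"

definition ret_cycles :: "'v set \<Rightarrow> ('v \<times> 'v) set \<Rightarrow> ('v \<times> 'v) set set" where
  "ret_cycles V A = {path_arcs P1 \<union> path_arcs P2 | P1 P2.
      dpath V A P1 \<and> dpath V A P2 \<and> P1 \<noteq> P2 \<and> hd P1 = hd P2 \<and> last P1 = last P2 \<and>
      set P1 \<inter> set P2 = {hd P1, last P1}}"

definition rooted_cactus :: "'x set \<Rightarrow> 'v set \<Rightarrow> ('v \<times> 'v) set \<Rightarrow> 'v \<Rightarrow> ('x \<Rightarrow> 'v) \<Rightarrow> bool" where
  "rooted_cactus X V A \<rho> \<phi> \<longleftrightarrow> finite X \<and> X \<noteq> {} \<and> rooted_dag V A \<rho> \<and> \<phi> ` X \<subseteq> V \<and>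
     (\<forall>v\<in>V. indeg A v \<le> 2) \<and>
     (\<forall>C1\<in>ret_cycles V A. \<forall>C2\<in>ret_cycles V A. C1 \<noteq> C2 \<longrightarrow> C1 \<inter> C2 = {}) \<and>
     (\<forall>v\<in>V. is_leaf A v \<or> (is_tree_vertex A v \<and> outdeg A v = 1) \<longrightarrow> v \<in> \<phi> ` X)"

definition time_stamp :: "'x set \<Rightarrow> 'v set \<Rightarrow> ('v \<times> 'v) set \<Rightarrow> ('x \<Rightarrow> 'v) \<Rightarrow> ('v \<Rightarrow> real) \<Rightarrow> bool" where
  "time_stamp X V A \<phi> t \<longleftrightarrow> (\<forall>v\<in>V. t v \<ge> 0) \<and> (\<forall>x\<in>X. t (\<phi> x) = 0) \<and>
     (\<forall>(u, v)\<in>A. \<not> is_reticulation A v \<longrightarrow> t u > t v) \<and>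
     (\<forall>v\<in>V. is_reticulation A v \<longrightarrow> (\<forall>p\<in>parents A v. t p = t v))"

definition size_ts :: "'v set \<Rightarrow> ('v \<Rightarrow> real) \<Rightarrow> nat" where
  "size_ts V t = card (t ` V) - 1"

definition ranking :: "'x set \<Rightarrow> 'v set \<Rightarrow> ('v \<times> 'v) set \<Rightarrow> ('x \<Rightarrow> 'v) \<Rightarrow> ('v \<Rightarrow> real) \<Rightarrow> bool" where
  "ranking X V A \<phi> r \<longleftrightarrow> time_stamp X V A \<phi> r \<and> r ` V = real ` {0..size_ts V r}"

definition ranked_cactus :: "'x set \<Rightarrow> 'v set \<Rightarrow> ('v \<times> 'v) set \<Rightarrow> 'v \<Rightarrow> ('x \<Rightarrow> 'v) \<Rightarrow> ('v \<Rightarrow> real) \<Rightarrow> bool" where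
  "ranked_cactus X V A \<rho> \<phi> r \<longleftrightarrow> rooted_cactus X V A \<rho> \<phi> \<and> ranking X V A \<phi> r"

definition root_paths :: "'v set \<Rightarrow> ('v \<times> 'v) set \<Rightarrow> 'v \<Rightarrow> 'v \<Rightarrow> 'v list set" where
  "root_paths V A \<rho> u = {p. dpath V A p \<and> hd p = \<rho> \<and> last p = u}"

text \<open>descendant V A rho u v: u is a descendant of v.\<close>
definition descendant :: "'v set \<Rightarrow> ('v \<times> 'v) set \<Rightarrow> 'v \<Rightarrow> 'v \<Rightarrow> 'v \<Rightarrow> bool" where
  "descendant V A \<rho> u v \<longleftrightarrow> (\<exists>p\<in>root_paths V A \<rho> u. v \<in> set p)"

definition strict_descendant :: "'v set \<Rightarrow> ('v \<times> 'v) set \<Rightarrow> 'v \<Rightarrow> 'v \<Rightarrow> 'v \<Rightarrow> bool" where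
  "strict_descendant V A \<rho> u v \<longleftrightarrow> descendant V A \<rho> u v \<and> (\<forall>p\<in>root_paths V A \<rho> u. v \<in> set p)"

definition nonstrict_descendant :: "'v set \<Rightarrow> ('v \<times> 'v) set \<Rightarrow> 'v \<Rightarrow> 'v \<Rightarrow> 'v \<Rightarrow> bool" where
  "nonstrict_descendant V A \<rho> u v \<longleftrightarrow> descendant V A \<rho> u v \<and> \<not> strict_descendant V A \<rho> u v"

definition Sset :: "'x set \<Rightarrow> 'v set \<Rightarrow> ('v \<times> 'v) set \<Rightarrow> 'v \<Rightarrow> ('x \<Rightarrow> 'v) \<Rightarrow> 'v \<Rightarrow> 'x set" where
  "Sset X V A \<rho> \<phi> u = {x\<in>X. strict_descendant V A \<rho> (\<phi> x) u}"

definition Hset :: "'x set \<Rightarrow> 'v set \<Rightarrow> ('v \<times> 'v) set \<Rightarrow> 'v \<Rightarrow> ('x \<Rightarrow> 'v) \<Rightarrow> 'v \<Rightarrow> 'x set" where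
  "Hset X V A \<rho> \<phi> u = {x\<in>X. nonstrict_descendant V A \<rho> (\<phi> x) u}"

definition Vlevel :: "'v set \<Rightarrow> ('v \<times> 'v) set \<Rightarrow> ('v \<Rightarrow> real) \<Rightarrow> nat \<Rightarrow> 'v set" where
  "Vlevel V A r i = {u\<in>V. r u \<le> real i \<and> (\<forall>p\<in>parents A u. r p > real i)}"

definition SPS :: "'x set \<Rightarrow> 'v set \<Rightarrow> ('v \<times> 'v) set \<Rightarrow> 'v \<Rightarrow> ('x \<Rightarrow> 'v) \<Rightarrow> ('v \<Rightarrow> real) \<Rightarrow> nat \<Rightarrow> ('x set \<times> 'x set) set" where
  "SPS X V A \<rho> \<phi> r i =
     {(Sset X V A \<rho> \<phi> u, Hset X V A \<rho> \<phi> u) | u. u \<in> Vlevel V A r i} \<union>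
     {(Hset X V A \<rho> \<phi> u, {}) | u. u \<in> Vlevel V A r i \<and> Hset X V A \<rho> \<phi> u \<noteq> {}}"

definition sp_le :: "'x set \<times> 'x set \<Rightarrow> 'x set \<times> 'x set \<Rightarrow> bool" where
  "sp_le P1 P2 \<longleftrightarrow> (case P1 of (S1, H1) \<Rightarrow> case P2 of (S2, H2) \<Rightarrow>
     P1 = P2 \<or> S1 \<union> H1 \<subseteq> S2 \<or> S1 \<union> H1 \<subseteq> H2 \<or> (S1 \<subset> S2 \<and> H1 = H2 \<and> H2 \<noteq> {}))"

definition sps_le :: "('x set \<times> 'x set) set \<Rightarrow> ('x set \<times> 'x set) set \<Rightarrow> bool" where
  "sps_le \<S>1 \<S>2 \<longleftrightarrow>
     (\<forall>P1\<in>\<S>1. \<exists>P2\<in>\<S>2. sp_le P1 P2) \<and>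
     (\<forall>(S2, H2)\<in>\<S>2. H2 \<noteq> {} \<longrightarrow>
        (\<exists>(S1, H1)\<in>\<S>1. H1 = H2) \<longrightarrow> (\<exists>(S1, H1)\<in>\<S>1. H1 = H2 \<and> sp_le (S1, H1) (S2, H2)))"

definition sps_less :: "('x set \<times> 'x set) set \<Rightarrow> ('x set \<times> 'x set) set \<Rightarrow> bool" where
  "sps_less \<S>1 \<S>2 \<longleftrightarrow> sps_le \<S>1 \<S>2 \<and> \<S>1 \<noteq> \<S>2"

end

theory Submission
  imports Defs
begin

text \<open>Two root paths to the same vertex that part ways span a reticulation cycle, and in a
  cactus distinct reticulation cycles share no arc. Hence, if a vertex \<open>u\<close> has non-strict
  descendants, the paths leaving \<open>u\<close> all meet the root paths avoiding \<open>u\<close> in a single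
  reticulation \<open>z\<close> (the sink of the cycle through the arc entering \<open>u\<close>), and \<open>H(u)\<close> is
  the set of labels below \<open>z\<close>. For an ancestor \<open>w\<close> of \<open>u\<close> this leaves three cases:
  the labels below \<open>u\<close> lie in \<open>S(w)\<close>, or they lie in \<open>H(w)\<close>, or \<open>H(u) = H(w)\<close> and
  \<open>S(u) \<subseteq> S(w)\<close>; in each case \<open>(S(u), H(u)) \<le> (S(w), H(w))\<close>.

  Every vertex of \<open>V\<^sub>i\<close> has an ancestor in \<open>V\<^sub>j\<close> for \<open>i < j\<close>, which gives (SP1). For (SP2),
  incomparable vertices with the same non-empty \<open>H\<close> have the same reticulation \<open>z\<close>, and the
  first vertex of level \<open>i\<close> on a path from the upper one to \<open>z\<close> is the required witness.
  The systems differ because a vertex of rank exactly \<open>j\<close> in \<open>V\<^sub>j\<close> is an unlabelled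
  tree vertex whose pair cannot come from a vertex of \<open>V\<^sub>i\<close>: such a vertex would lie below
  it, and the second child would then close a reticulation cycle sharing an arc with another.
  Finally \<open>V\<^sub>\<sigma> = {\<rho>}\<close> and \<open>S(\<rho>) = X\<close>.\<close>

section \<open>Directed paths\<close>

lemma dpath_Cons:
  "dpath V A (x # p) \<longleftrightarrow> x \<in> V \<and> (p = [] \<or> ((x, hd p) \<in> A \<and> dpath V A p))"
proof (cases p)
  case (Cons y q)
  have "(\<forall>i. Suc i < length (x # p) \<longrightarrow> ((x # p) ! i, (x # p) ! Suc i) \<in> A) \<longleftrightarrow>
        (x, y) \<in> A \<and> (\<forall>i. Suc i < length p \<longrightarrow> (p ! i, p ! Suc i) \<in> A)"
    (is "?L \<longleftrightarrow> ?R")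
  proof
    assume ?L
    then show ?R using Cons by (metis Suc_less_eq length_Cons nth_Cons_0 nth_Cons_Suc zero_less_Suc)
  next
    assume ?R
    then show ?L using Cons by (auto simp: nth_Cons split: nat.split)
  qed
  then show ?thesis using Cons by (auto simp: dpath_def)
qed (simp add: dpath_def)

lemma dpath_not_Nil: "dpath V A p \<Longrightarrow> p \<noteq> []"
  by (simp add: dpath_def)

lemma dpath_nth_rtrancl:
  assumes "dpath V A p" "i \<le> j" "j < length p"
  shows "(p ! i, p ! j) \<in> A\<^sup>*"
  using assms(2,3)
proof (induction j)
  case 0 then show ?case by simp
next
  case (Suc j)
  show ?case
  proof (cases "i = Suc j")
    case True then show ?thesis by simp
  next
    case False
    then have "(p ! i, p ! j) \<in> A\<^sup>*" using Suc by simp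
    moreover have "(p ! j, p ! Suc j) \<in> A" using assms(1) Suc.prems unfolding dpath_def by blast
    ultimately show ?thesis by simp
  qed
qed

lemma dpath_nth_trancl:
  assumes "dpath V A p" "i < j" "j < length p"
  shows "(p ! i, p ! j) \<in> A\<^sup>+"
proof -
  have "(p ! i, p ! (j - 1)) \<in> A\<^sup>*" using dpath_nth_rtrancl[OF assms(1)] assms by simp
  moreover have "(p ! (j - 1), p ! j) \<in> A" using assms unfolding dpath_def
    by (metis Suc_pred' less_nat_zero_code not_gr_zero)
  ultimately show ?thesis by simp
qed

lemma acyclic_dpath_distinct:
  assumes "acyclic A" "dpath V A p"
  shows "distinct p"
  unfolding distinct_conv_nth
proof (intro allI impI)
  have no_repeat: False if "a < b" "b < length p" "p ! a = p ! b" for a b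
    using dpath_nth_trancl[OF assms(2) that(1,2)] that(3) assms(1) by (simp add: acyclic_def)
  fix i j assume "i < length p" "j < length p" "i \<noteq> j"
  then show "p ! i \<noteq> p ! j" using no_repeat by (metis linorder_neqE_nat)
qed

lemma dpath_mem_rtrancl:
  assumes "dpath V A p" "v \<in> set p"
  shows "(hd p, v) \<in> A\<^sup>*" "(v, last p) \<in> A\<^sup>*"
proof -
  obtain i where i: "i < length p" "p ! i = v" using assms(2) by (metis in_set_conv_nth)
  have "p \<noteq> []" using dpath_not_Nil[OF assms(1)] .
  then show "(hd p, v) \<in> A\<^sup>*" "(v, last p) \<in> A\<^sup>*"
    using dpath_nth_rtrancl[OF assms(1), of 0 i] dpath_nth_rtrancl[OF assms(1), of i "length p - 1"] i
    by (simp_all add: hd_conv_nth last_conv_nth)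
qed

lemma rtrancl_imp_dpath:
  assumes "(a, b) \<in> A\<^sup>*" "a \<in> V" "A \<subseteq> V \<times> V"
  shows "\<exists>p. dpath V A p \<and> hd p = a \<and> last p = b"
  using assms(1)
proof (induction rule: rtrancl_induct)
  case base then show ?case using assms(2) by (intro exI[of _ "[a]"]) (simp add: dpath_def)
next
  case (step b c)
  then obtain p where p: "dpath V A p" "hd p = a" "last p = b" by blast
  have "dpath V A (p @ [c])" unfolding dpath_def
  proof (intro conjI allI impI)
    show "set (p @ [c]) \<subseteq> V" using p step assms(3) by (auto simp: dpath_def)
    fix i assume i: "Suc i < length (p @ [c])"
    show "((p @ [c]) ! i, (p @ [c]) ! Suc i) \<in> A"
    proof (cases "Suc i < length p")
      case True then show ?thesis using p(1) by (simp add: nth_append dpath_def)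
    next
      case False
      then have "i = length p - 1" "p \<noteq> []" using i p(1) by (auto simp: dpath_def)
      then show ?thesis using step(2) p(3) by (simp add: nth_append last_conv_nth)
    qed
  qed simp
  then show ?case using p dpath_not_Nil[OF p(1)] by (intro exI[of _ "p @ [c]"]) simp
qed

lemma dpath_append:
  assumes "dpath V A p" "dpath V A q" "last p = hd q"
  shows "dpath V A (p @ tl q) \<and> hd (p @ tl q) = hd p \<and> last (p @ tl q) = last q \<and>
         set (p @ tl q) = set p \<union> set q"
  using assms
proof (induction p)
  case Nil then show ?case by (simp add: dpath_def)
next
  case (Cons x p)
  have qne: "q \<noteq> []" using Cons.prems(2) by (simp add: dpath_def)
  show ?case
  proof (cases p)
    case Nil
    then have "q = x # tl q" using Cons.prems(3) qne by (cases q) auto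
    then have e: "(x # p) @ tl q = q" using Nil by simp
    have xq: "x \<in> set q" using \<open>q = x # tl q\<close> by (metis list.set_intros(1))
    have "hd q = x" using \<open>q = x # tl q\<close> by (metis list.sel(1))
    then show ?thesis using e xq Nil Cons.prems(2) by auto
  next
    case (Cons y p')
    have dx: "x \<in> V" "(x, hd p) \<in> A" "dpath V A p" using Cons.prems(1) Cons by (auto simp: dpath_Cons)
    have IH: "dpath V A (p @ tl q) \<and> hd (p @ tl q) = hd p \<and> last (p @ tl q) = last q \<and> set (p @ tl q) = set p \<union> set q"
      using Cons.IH dx(3) Cons.prems(2,3) Cons by simp
    have "dpath V A (x # (p @ tl q))" using dx IH by (simp add: dpath_Cons)
    then show ?thesis using IH Cons by auto
  qed
qed

lemma dpath_take:
  assumes "dpath V A p" "i < length p"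
  shows "dpath V A (take (Suc i) p)" "hd (take (Suc i) p) = hd p" "last (take (Suc i) p) = p ! i"
        "set (take (Suc i) p) \<subseteq> set p"
proof -
  show "dpath V A (take (Suc i) p)" using assms unfolding dpath_def
    by (auto dest: in_set_takeD)
  show "hd (take (Suc i) p) = hd p" using assms by (cases p) auto
  have "take (Suc i) p \<noteq> []" using assms by (cases p) auto
  moreover have "length (take (Suc i) p) = Suc i" using assms by simp
  ultimately have "last (take (Suc i) p) = take (Suc i) p ! i" by (simp add: last_conv_nth)
  then show "last (take (Suc i) p) = p ! i" by simp
  show "set (take (Suc i) p) \<subseteq> set p" by (rule set_take_subset)
qed

lemma in_path_arcs_iff:
  "(x, y) \<in> path_arcs p \<longleftrightarrow> (\<exists>t. Suc t < length p \<and> p ! t = x \<and> p ! Suc t = y)"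
  unfolding path_arcs_def in_set_zip
  apply (auto simp: nth_tl)
  apply (rule_tac x=n in exI, simp)
  done

lemma path_arcs_subset: "dpath V A p \<Longrightarrow> path_arcs p \<subseteq> A"
  by (auto simp: in_path_arcs_iff dpath_def)

lemma path_arcs_mem: "(x, v) \<in> path_arcs Q \<Longrightarrow> x \<in> set Q \<and> v \<in> set Q"
  by (auto simp: in_path_arcs_iff)

section \<open>Reticulation cycles spanned by diverging paths\<close>

definition segment :: "'a list \<Rightarrow> nat \<Rightarrow> nat \<Rightarrow> 'a list" where
  "segment p a b = map (\<lambda>t. p ! t) [a..<Suc b]"

lemma segment_length: "length (segment p a b) = Suc b - a"
  by (simp add: segment_def del: upt_Suc)

lemma segment_nth: "t < Suc b - a \<Longrightarrow> segment p a b ! t = p ! (a + t)"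
  by (simp add: segment_def del: upt_Suc)

lemma segment_hd: "a \<le> b \<Longrightarrow> hd (segment p a b) = p ! a"
  by (simp add: segment_def upt_conv_Cons del: upt_Suc)

lemma segment_last: "a \<le> b \<Longrightarrow> last (segment p a b) = p ! b"
  by (simp add: segment_def)

lemma segment_set: "set (segment p a b) = (\<lambda>t. p ! t) ` {a..b}"
  by (auto simp: segment_def)

lemma segment_set_subset: "b < length p \<Longrightarrow> set (segment p a b) \<subseteq> set p"
  by (auto simp: segment_set)

lemma dpath_segment:
  assumes "dpath V A p" "a \<le> b" "b < length p"
  shows "dpath V A (segment p a b)"
  unfolding dpath_def
proof (intro conjI allI impI)
  show "segment p a b \<noteq> []" using assms by (simp add: segment_def)
  show "set (segment p a b) \<subseteq> V" using assms segment_set_subset[of b p a] by (auto simp: dpath_def)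
  fix i assume i: "Suc i < length (segment p a b)"
  then have "Suc (a + i) < length p" using assms by (simp add: segment_length)
  then have "(p ! (a + i), p ! Suc (a + i)) \<in> A" using assms(1) by (simp add: dpath_def)
  then show "(segment p a b ! i, segment p a b ! Suc i) \<in> A" using i by (simp add: segment_nth segment_length)
qed

lemma segment_arc:
  assumes "a \<le> t" "t < b"
  shows "(p ! t, p ! Suc t) \<in> path_arcs (segment p a b)"
  unfolding in_path_arcs_iff
proof (intro exI[of _ "t - a"] conjI)
  show "Suc (t - a) < length (segment p a b)" using assms by (simp add: segment_length)
  show "segment p a b ! (t - a) = p ! t" using assms by (simp add: segment_nth)
  show "segment p a b ! Suc (t - a) = p ! Suc t" using assms by (simp add: segment_nth)
qed

abbreviation cycle_arcs :: "'v list \<Rightarrow> 'v list \<Rightarrow> ('v \<times> 'v) set" where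
  "cycle_arcs Q1 Q2 \<equiv> path_arcs Q1 \<union> path_arcs Q2"

definition cycle_paths :: "'v set \<Rightarrow> ('v \<times> 'v) set \<Rightarrow> 'v list \<Rightarrow> 'v list \<Rightarrow> bool" where
  "cycle_paths V A Q1 Q2 \<longleftrightarrow> dpath V A Q1 \<and> dpath V A Q2 \<and> Q1 \<noteq> Q2 \<and> hd Q1 = hd Q2 \<and>
      last Q1 = last Q2 \<and> set Q1 \<inter> set Q2 = {hd Q1, last Q1}"

lemma cycle_paths_ret_cycles: "cycle_paths V A Q1 Q2 \<Longrightarrow> cycle_arcs Q1 Q2 \<in> ret_cycles V A"
  unfolding ret_cycles_def cycle_paths_def
  by (rule CollectI, rule exI[of _ Q1], rule exI[of _ Q2]) simp

lemma cycle_paths_sym: "cycle_paths V A Q1 Q2 \<Longrightarrow> cycle_paths V A Q2 Q1"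
  unfolding cycle_paths_def by (simp add: Int_commute) (metis)

lemma segments_cycle_paths:
  assumes acy: "acyclic A" and d1: "dpath V A P1" and d2: "dpath V A P2"
    and ab: "Suc a < b" "b < length P1" and a': "a' < length P2" and b': "b' < length P2"
    and ends: "P1 ! a = P2 ! a'" "P1 ! b = P2 ! b'"
    and inner: "\<And>t. a < t \<Longrightarrow> t < b \<Longrightarrow> P1 ! t \<notin> set P2"
  shows "a' < b' \<and> cycle_paths V A (segment P1 a b) (segment P2 a' b')"
proof
  have "P1 ! a \<noteq> P1 ! b" using acyclic_dpath_distinct[OF acy d1] ab by (simp add: nth_eq_iff_index_eq)
  then have "a' \<noteq> b'" using ends by metis
  moreover have "\<not> b' < a'"
  proof
    assume "b' < a'"
    then have "(P1 ! b, P1 ! a) \<in> A\<^sup>+" using dpath_nth_trancl[OF d2 _ a'] ends by simp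
    moreover have "(P1 ! a, P1 ! b) \<in> A\<^sup>+" using dpath_nth_trancl[OF d1 _ ab(2)] ab by simp
    ultimately show False using acy by (meson acyclic_def trancl_trans)
  qed
  ultimately show a'b': "a' < b'" by simp
  let ?Q1 = "segment P1 a b" and ?Q2 = "segment P2 a' b'"
  show "cycle_paths V A ?Q1 ?Q2" unfolding cycle_paths_def
  proof (intro conjI)
    show "dpath V A ?Q1" using dpath_segment[OF d1] ab by simp
    show "dpath V A ?Q2" using dpath_segment[OF d2] a'b' b' by simp
    have "P1 ! Suc a \<in> set ?Q1" using ab by (auto simp: segment_set)
    moreover have "P1 ! Suc a \<notin> set ?Q2" using inner[of "Suc a"] ab segment_set_subset[OF b'] by auto
    ultimately show "?Q1 \<noteq> ?Q2" by metis
    show "hd ?Q1 = hd ?Q2" using ab a'b' ends by (simp add: segment_hd)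
    show "last ?Q1 = last ?Q2" using ab a'b' ends by (simp add: segment_last)
    show "set ?Q1 \<inter> set ?Q2 = {hd ?Q1, last ?Q1}"
    proof
      show "set ?Q1 \<inter> set ?Q2 \<subseteq> {hd ?Q1, last ?Q1}"
      proof
        fix v assume v: "v \<in> set ?Q1 \<inter> set ?Q2"
        then obtain t where t: "a \<le> t" "t \<le> b" "v = P1 ! t" by (auto simp: segment_set)
        have "v \<in> set P2" using v segment_set_subset[OF b'] by auto
        then have "\<not> (a < t \<and> t < b)" using inner t by blast
        then have "t = a \<or> t = b" using t by arith
        then show "v \<in> {hd ?Q1, last ?Q1}" using t ab by (auto simp: segment_hd segment_last)
      qed
      have "P1 ! a \<in> (!) P2 ` {a'..b'}" "P1 ! b \<in> (!) P2 ` {a'..b'}"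
        using a'b' ends by (auto intro: rev_image_eqI)
      then show "{hd ?Q1, last ?Q1} \<subseteq> set ?Q1 \<inter> set ?Q2"
        using ab by (auto simp: segment_hd segment_last segment_set)
    qed
  qed
qed

text \<open>Two paths with common endpoints that separate at the vertex \<open>P1 ! k\<close> span a
  reticulation cycle between the last common vertex before \<open>k\<close> and the first one after \<open>k\<close>.\<close>

lemma diverging_dpaths_cycle:
  assumes acy: "acyclic A" and d1: "dpath V A P1" and d2: "dpath V A P2"
    and hd: "hd P1 = hd P2" and lst: "last P1 = last P2"
    and k: "k < length P1" "P1 ! k \<notin> set P2"
  shows "\<exists>a b a' b'. a < k \<and> k < b \<and> b < length P1 \<and> a' < b' \<and> b' < length P2 \<and>
     P1 ! a = P2 ! a' \<and> P1 ! b = P2 ! b' \<and> cycle_paths V A (segment P1 a b) (segment P2 a' b')"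
proof -
  have ne1: "P1 \<noteq> []" and ne2: "P2 \<noteq> []" using d1 d2 by (auto simp: dpath_def)
  have h0: "P1 ! 0 \<in> set P2" using hd ne1 ne2 by (metis hd_conv_nth hd_in_set)
  have hl: "P1 ! (length P1 - 1) \<in> set P2" using lst ne1 ne2 by (metis last_conv_nth last_in_set)
  have k0: "0 < k" using k h0 by (cases k) auto
  have kl: "k < length P1 - 1" using k hl by (cases "k = length P1 - 1") auto
  define a where "a = (GREATEST t. t < k \<and> P1 ! t \<in> set P2)"
  have aP: "a < k \<and> P1 ! a \<in> set P2" unfolding a_def
    by (rule GreatestI_nat[of _ 0 k]) (use k0 h0 in auto)
  have aG: "\<And>t. t < k \<Longrightarrow> P1 ! t \<in> set P2 \<Longrightarrow> t \<le> a" unfolding a_def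
    by (rule Greatest_le_nat[of _ _ k]) auto
  define b where "b = (LEAST t. k < t \<and> t < length P1 \<and> P1 ! t \<in> set P2)"
  have bP: "k < b \<and> b < length P1 \<and> P1 ! b \<in> set P2" unfolding b_def
    by (rule LeastI[of _ "length P1 - 1"]) (use kl hl in auto)
  have bL: "\<And>t. k < t \<Longrightarrow> t < length P1 \<Longrightarrow> P1 ! t \<in> set P2 \<Longrightarrow> b \<le> t" unfolding b_def
    by (rule Least_le) auto
  have inner: "P1 ! t \<notin> set P2" if "a < t" "t < b" for t
    using aG[of t] bL[of t] k bP that by (metis linorder_neqE_nat not_le order.strict_trans)
  obtain a' where a': "a' < length P2" "P2 ! a' = P1 ! a" using aP by (metis in_set_conv_nth)
  obtain b' where b': "b' < length P2" "P2 ! b' = P1 ! b" using bP by (metis in_set_conv_nth)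
  have "a' < b' \<and> cycle_paths V A (segment P1 a b) (segment P2 a' b')"
    using segments_cycle_paths[OF acy d1 d2 _ _ a'(1) b'(1) a'(2)[symmetric] b'(2)[symmetric] inner]
      aP bP by simp
  then show ?thesis using aP bP a' b' by (intro exI[of _ a] exI[of _ b] exI[of _ a'] exI[of _ b']) auto
qed


lemma diverging_dpaths_cycle_through:
  assumes acy: "acyclic A" and d1: "dpath V A P1" and d2: "dpath V A P2"
    and hd: "hd P1 = hd P2" and lst: "last P1 = last P2"
    and k: "k < length P1" "P1 ! k \<notin> set P2"
  shows "\<exists>Q1 Q2 b. cycle_paths V A Q1 Q2 \<and> k < b \<and> b < length P1 \<and> last Q1 = P1 ! b \<and>
     last Q1 \<in> set P2 \<and> P1 ! k \<noteq> hd Q1 \<and>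
     (P1 ! (k - 1), P1 ! k) \<in> path_arcs Q1 \<and> (P1 ! k, P1 ! Suc k) \<in> path_arcs Q1"
proof -
  obtain a b a' b' where c: "a < k" "k < b" "b < length P1" "a' < b'" "b' < length P2"
    "P1 ! a = P2 ! a'" "P1 ! b = P2 ! b'" "cycle_paths V A (segment P1 a b) (segment P2 a' b')"
    using diverging_dpaths_cycle[OF assms] by blast
  let ?Q1 = "segment P1 a b"
  have "P1 ! a \<noteq> P1 ! k" using c(4-6) k(2) by (metis nth_mem order.strict_trans)
  moreover have "(P1 ! (k - 1), P1 ! Suc (k - 1)) \<in> path_arcs ?Q1" using c by (intro segment_arc) auto
  moreover have "(P1 ! k, P1 ! Suc k) \<in> path_arcs ?Q1" using c by (intro segment_arc) auto
  moreover have "Suc (k - 1) = k" using c by simp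
  moreover have "P2 ! b' \<in> set P2" using c(5) by simp
  ultimately show ?thesis using c
    by (intro exI[of _ ?Q1] exI[of _ "segment P2 a' b'"] exI[of _ b]) (auto simp: segment_hd segment_last)
qed

lemma path_arcs_same_target:
  assumes "distinct Q" "(x1, v) \<in> path_arcs Q" "(x2, v) \<in> path_arcs Q"
  shows "x1 = x2"
proof -
  obtain t1 where t1: "Suc t1 < length Q" "Q ! t1 = x1" "Q ! Suc t1 = v" using assms(2) by (auto simp: in_path_arcs_iff)
  obtain t2 where t2: "Suc t2 < length Q" "Q ! t2 = x2" "Q ! Suc t2 = v" using assms(3) by (auto simp: in_path_arcs_iff)
  have "Q ! Suc t1 = Q ! Suc t2" using t1 t2 by simp
  then have "Suc t1 = Suc t2" using t1(1) t2(1) by (subst (asm) nth_eq_iff_index_eq[OF assms(1)]) auto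
  then show ?thesis using t1 t2 by simp
qed

lemma path_arcs_same_source:
  assumes "distinct Q" "(v, y1) \<in> path_arcs Q" "(v, y2) \<in> path_arcs Q"
  shows "y1 = y2"
proof -
  obtain t1 where t1: "Suc t1 < length Q" "Q ! t1 = v" "Q ! Suc t1 = y1" using assms(2) by (auto simp: in_path_arcs_iff)
  obtain t2 where t2: "Suc t2 < length Q" "Q ! t2 = v" "Q ! Suc t2 = y2" using assms(3) by (auto simp: in_path_arcs_iff)
  have "Q ! t1 = Q ! t2" using t1 t2 by simp
  then have "t1 = t2" using t1(1) t2(1) by (subst (asm) nth_eq_iff_index_eq[OF assms(1)]) auto
  then show ?thesis using t1 t2 by simp
qed

lemma path_arcs_target_neq_hd:
  assumes "distinct Q" "(x, v) \<in> path_arcs Q" shows "v \<noteq> hd Q"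
proof -
  obtain t where t: "Suc t < length Q" "Q ! t = x" "Q ! Suc t = v" using assms(2) by (auto simp: in_path_arcs_iff)
  have "Q ! Suc t \<noteq> Q ! 0" using t by (subst nth_eq_iff_index_eq[OF assms(1)]) auto
  moreover have "Q \<noteq> []" using t by auto
  ultimately show ?thesis using t by (simp add: hd_conv_nth)
qed

lemma path_arcs_source_neq_last:
  assumes "distinct Q" "(v, y) \<in> path_arcs Q" shows "v \<noteq> last Q"
proof -
  obtain t where t: "Suc t < length Q" "Q ! t = v" "Q ! Suc t = y" using assms(2) by (auto simp: in_path_arcs_iff)
  have "Q ! t \<noteq> Q ! (length Q - 1)" using t by (subst nth_eq_iff_index_eq[OF assms(1)]) auto
  moreover have "Q \<noteq> []" using t by auto
  ultimately show ?thesis using t by (simp add: last_conv_nth)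
qed

lemma cycle_two_in_arcs_sink:
  assumes acy: "acyclic A" and cd: "cycle_paths V A Q1 Q2"
    and e1: "(x1, v) \<in> cycle_arcs Q1 Q2" and e2: "(x2, v) \<in> cycle_arcs Q1 Q2"
    and ne: "x1 \<noteq> x2"
  shows "v = last Q1"
proof -
  have d1: "distinct Q1" and d2: "distinct Q2" using cd acy acyclic_dpath_distinct unfolding cycle_paths_def by blast+
  have "\<exists>y1 y2. (y1, v) \<in> path_arcs Q1 \<and> (y2, v) \<in> path_arcs Q2"
  proof (cases "(x1, v) \<in> path_arcs Q1")
    case True
    then have "(x2, v) \<notin> path_arcs Q1" using path_arcs_same_target[OF d1] ne by metis
    then show ?thesis using True e2 by blast
  next
    case False
    then have "(x1, v) \<in> path_arcs Q2" using e1 by blast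
    moreover have "(x2, v) \<notin> path_arcs Q2" using path_arcs_same_target[OF d2] ne calculation by metis
    ultimately show ?thesis using e2 by blast
  qed
  then obtain y1 y2 where y: "(y1, v) \<in> path_arcs Q1" "(y2, v) \<in> path_arcs Q2" by blast
  have "v \<in> set Q1 \<inter> set Q2" using path_arcs_mem[OF y(1)] path_arcs_mem[OF y(2)] by blast
  then have "v = hd Q1 \<or> v = last Q1" using cd unfolding cycle_paths_def by blast
  moreover have "v \<noteq> hd Q1" using path_arcs_target_neq_hd[OF d1 y(1)] .
  ultimately show ?thesis by blast
qed

lemma cycle_two_out_arcs_source:
  assumes acy: "acyclic A" and cd: "cycle_paths V A Q1 Q2"
    and e1: "(v, y1) \<in> cycle_arcs Q1 Q2" and e2: "(v, y2) \<in> cycle_arcs Q1 Q2"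
    and ne: "y1 \<noteq> y2"
  shows "v = hd Q1"
proof -
  have d1: "distinct Q1" and d2: "distinct Q2" using cd acy acyclic_dpath_distinct unfolding cycle_paths_def by blast+
  have "\<exists>z1 z2. (v, z1) \<in> path_arcs Q1 \<and> (v, z2) \<in> path_arcs Q2"
  proof (cases "(v, y1) \<in> path_arcs Q1")
    case True
    then have "(v, y2) \<notin> path_arcs Q1" using path_arcs_same_source[OF d1] ne by metis
    then show ?thesis using True e2 by blast
  next
    case False
    then have "(v, y1) \<in> path_arcs Q2" using e1 by blast
    moreover have "(v, y2) \<notin> path_arcs Q2" using path_arcs_same_source[OF d2] ne calculation by metis
    ultimately show ?thesis using e2 by blast
  qed
  then obtain z1 z2 where y: "(v, z1) \<in> path_arcs Q1" "(v, z2) \<in> path_arcs Q2" by blast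
  have "v \<in> set Q1 \<inter> set Q2" using path_arcs_mem[OF y(1)] path_arcs_mem[OF y(2)] by blast
  then have "v = hd Q1 \<or> v = last Q1" using cd unfolding cycle_paths_def by blast
  moreover have "v \<noteq> last Q1" using path_arcs_source_neq_last[OF d1 y(1)] .
  ultimately show ?thesis by blast
qed

lemma distinct_hd_eq_last:
  assumes "distinct Q" "Q \<noteq> []" "hd Q = last Q" shows "Q = [hd Q]"
proof -
  have "Q ! 0 = Q ! (length Q - 1)" using assms by (simp add: hd_conv_nth last_conv_nth)
  then have "length Q - 1 = 0" using assms(1,2) by (simp add: nth_eq_iff_index_eq)
  then have "length Q = 1" using assms(2) by (cases Q) auto
  then show ?thesis using assms(2) by (cases Q) auto
qed

lemma length_2_conv: "length Q = 2 \<Longrightarrow> Q = [hd Q, last Q]"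
  by (cases Q; cases "tl Q") auto

lemma cycle_paths_length:
  assumes acy: "acyclic A" and cd: "cycle_paths V A Q1 Q2"
  shows "hd Q1 \<noteq> last Q1" "2 \<le> length Q1" "2 \<le> length Q2" "3 \<le> length Q1 \<or> 3 \<le> length Q2"
proof -
  have d1: "distinct Q1" and d2: "distinct Q2" and ne1: "Q1 \<noteq> []" and ne2: "Q2 \<noteq> []"
    using cd acy acyclic_dpath_distinct unfolding cycle_paths_def dpath_def by blast+
  have eq: "hd Q1 = hd Q2" "last Q1 = last Q2" "Q1 \<noteq> Q2" using cd unfolding cycle_paths_def by auto
  show hl: "hd Q1 \<noteq> last Q1"
  proof
    assume h: "hd Q1 = last Q1"
    then have "Q1 = [hd Q1]" using distinct_hd_eq_last[OF d1 ne1] by simp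
    moreover have "Q2 = [hd Q2]" using distinct_hd_eq_last[OF d2 ne2] h eq by simp
    ultimately show False using eq by metis
  qed
  show l1: "2 \<le> length Q1" using hl ne1 by (cases Q1) (auto split: if_splits simp: Suc_le_eq)
  have "hd Q2 \<noteq> last Q2" using hl eq by simp
  then show l2: "2 \<le> length Q2" using ne2 by (cases Q2) (auto split: if_splits simp: Suc_le_eq)
  show "3 \<le> length Q1 \<or> 3 \<le> length Q2"
  proof (rule ccontr)
    assume "\<not> (3 \<le> length Q1 \<or> 3 \<le> length Q2)"
    then have "length Q1 = 2" "length Q2 = 2" using l1 l2 by auto
    then have "Q1 = [hd Q1, last Q1]" "Q2 = [hd Q2, last Q2]" using length_2_conv by blast+
    then show False using eq by metis
  qed
qed

lemma cycle_sink_two_in_arcs: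
  assumes acy: "acyclic A" and cd: "cycle_paths V A Q1 Q2"
  shows "\<exists>x1 x2. x1 \<noteq> x2 \<and> (x1, last Q1) \<in> path_arcs Q1 \<and> (x2, last Q1) \<in> path_arcs Q2"
proof -
  have d1: "distinct Q1" and d2: "distinct Q2" and ne1: "Q1 \<noteq> []" and ne2: "Q2 \<noteq> []"
    using cd acy acyclic_dpath_distinct unfolding cycle_paths_def dpath_def by blast+
  have eq: "hd Q1 = hd Q2" "last Q1 = last Q2" "Q1 \<noteq> Q2" and int: "set Q1 \<inter> set Q2 = {hd Q1, last Q1}"
    using cd unfolding cycle_paths_def by auto
  note L = cycle_paths_length[OF acy cd]
  define x1 where "x1 = Q1 ! (length Q1 - 2)"
  define x2 where "x2 = Q2 ! (length Q2 - 2)"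
  have a1: "(x1, last Q1) \<in> path_arcs Q1" unfolding in_path_arcs_iff x1_def
    using L ne1 by (intro exI[of _ "length Q1 - 2"]) (auto simp: last_conv_nth Suc_diff_Suc numeral_2_eq_2)
  have a2: "(x2, last Q1) \<in> path_arcs Q2" unfolding in_path_arcs_iff x2_def
    using L eq ne2 by (intro exI[of _ "length Q2 - 2"]) (auto simp: last_conv_nth Suc_diff_Suc numeral_2_eq_2)
  have "x1 \<noteq> x2"
  proof
    assume x: "x1 = x2"
    have "x1 \<in> set Q1 \<inter> set Q2" using path_arcs_mem[OF a1] path_arcs_mem[OF a2] x by blast
    then have "x1 = hd Q1 \<or> x1 = last Q1" using int by blast
    moreover have "x1 \<noteq> last Q1" using path_arcs_source_neq_last[OF d1 a1] .
    ultimately have h1: "x1 = hd Q1" by blast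
    then have "Q1 ! (length Q1 - 2) = Q1 ! 0" using x1_def L ne1 by (simp add: hd_conv_nth)
    then have "length Q1 - 2 = 0" using L by (subst (asm) nth_eq_iff_index_eq[OF d1]) auto
    then have "length Q1 = 2" using L by simp
    have h2: "x2 = hd Q2" using h1 x eq by simp
    then have "Q2 ! (length Q2 - 2) = Q2 ! 0" using x2_def L ne2 by (simp add: hd_conv_nth)
    then have "length Q2 - 2 = 0" using L by (subst (asm) nth_eq_iff_index_eq[OF d2]) auto
    then have "length Q2 = 2" using L by simp
    show False using length_2_conv \<open>length Q1 = 2\<close> \<open>length Q2 = 2\<close> eq by metis
  qed
  then show ?thesis using a1 a2 by blast
qed

section \<open>Rooted cactus graphs\<close>

definition root_dominates :: "'v set \<Rightarrow> ('v \<times> 'v) set \<Rightarrow> 'v \<Rightarrow> 'v \<Rightarrow> 'v \<Rightarrow> bool" where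
  "root_dominates V A \<rho> u y \<longleftrightarrow> (\<forall>p\<in>root_paths V A \<rho> y. u \<in> set p)"

locale rooted_cactus_graph =
  fixes X :: "'x set" and V :: "'v set" and A :: "('v \<times> 'v) set" and \<rho> :: 'v
    and \<phi> :: "'x \<Rightarrow> 'v"
  assumes cactus: "rooted_cactus X V A \<rho> \<phi>"
begin

abbreviation "rpaths \<equiv> root_paths V A \<rho>"
abbreviation "dominates \<equiv> root_dominates V A \<rho>"
abbreviation "S \<equiv> Sset X V A \<rho> \<phi>"
abbreviation "H \<equiv> Hset X V A \<rho> \<phi>"

definition cluster :: "'v \<Rightarrow> 'x set" where
  "cluster z = {x\<in>X. (z, \<phi> x) \<in> A\<^sup>*}"

lemma rooted: "rooted_dag V A \<rho>" using cactus by (simp add: rooted_cactus_def)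
lemma finite_V: "finite V" using rooted by (simp add: rooted_dag_def)
lemma arcs_subset: "A \<subseteq> V \<times> V" using rooted by (simp add: rooted_dag_def)
lemma acyclic_arcs: "acyclic A" using rooted by (simp add: rooted_dag_def)
lemma root_in_V: "\<rho> \<in> V" using rooted by (simp add: rooted_dag_def)
lemma indeg_root: "indeg A \<rho> = 0" using rooted by (simp add: rooted_dag_def)
lemma root_rtrancl: "v \<in> V \<Longrightarrow> (\<rho>, v) \<in> A\<^sup>*" using rooted by (simp add: rooted_dag_def)
lemma label_in_V: "x \<in> X \<Longrightarrow> \<phi> x \<in> V" using cactus by (auto simp: rooted_cactus_def)
lemma labelled_if_leaf_or_unary:
  "v \<in> V \<Longrightarrow> is_leaf A v \<or> (is_tree_vertex A v \<and> outdeg A v = 1) \<Longrightarrow> v \<in> \<phi> ` X"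
  using cactus unfolding rooted_cactus_def by blast

lemma cycle_paths_share_arc:
  assumes "cycle_paths V A Q1 Q2" "cycle_paths V A R1 R2"
    and "e \<in> cycle_arcs Q1 Q2" "e \<in> cycle_arcs R1 R2"
  shows "cycle_arcs Q1 Q2 = cycle_arcs R1 R2"
proof -
  have disjoint: "C1 \<inter> C2 = {}"
    if "C1 \<in> ret_cycles V A" "C2 \<in> ret_cycles V A" "C1 \<noteq> C2" for C1 C2
    using cactus that unfolding rooted_cactus_def by blast
  show ?thesis
    using disjoint[OF cycle_paths_ret_cycles[OF assms(1)] cycle_paths_ret_cycles[OF assms(2)]] assms(3,4)
    by blast
qed

lemma finite_A: "finite A" using finite_V arcs_subset by (meson finite_SigmaI finite_subset)
lemma finite_parents: "finite (parents A v)"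
proof (rule finite_subset[OF _ finite_V])
  show "parents A v \<subseteq> V" using arcs_subset by (auto simp: parents_def)
qed

lemma reticulation_iff: "is_reticulation A v \<longleftrightarrow> 2 \<le> card (parents A v)"
  by (simp add: is_reticulation_def indeg_def)

lemma two_parents_reticulation:
  assumes h: "(a, v) \<in> A" "(b, v) \<in> A" "a \<noteq> b"
  shows "is_reticulation A v"
proof -
  have "{a, b} \<subseteq> parents A v" using h by (auto simp: parents_def)
  then have "card {a, b} \<le> card (parents A v)" using finite_parents card_mono by blast
  moreover have "card {a, b} = 2" using h(3) by simp
  ultimately show ?thesis unfolding reticulation_iff by linarith
qed

lemma parents_non_reticulation:
  assumes h: "\<not> is_reticulation A v" "(p, v) \<in> A"
  shows "parents A v = {p}"
proof -
  have pin: "p \<in> parents A v" using h by (simp add: parents_def)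
  { fix q assume "q \<in> parents A v" "q \<noteq> p"
    then have "is_reticulation A v" using two_parents_reticulation h pin by (auto simp: parents_def) }
  then show ?thesis using pin h by blast
qed

lemma reticulation_other_parent:
  assumes "is_reticulation A v"
  shows "\<exists>q. (q, v) \<in> A \<and> q \<noteq> p"
proof -
  have "2 \<le> card (parents A v)" using assms by (simp add: reticulation_iff)
  moreover have "card (parents A v) \<le> 1" if "parents A v \<subseteq> {p}"
    using card_mono[OF _ that] by simp
  ultimately have "\<not> parents A v \<subseteq> {p}" by linarith
  then show ?thesis by (auto simp: parents_def)
qed

lemma no_arc_into_root: "(a, \<rho>) \<notin> A"
proof
  assume "(a, \<rho>) \<in> A"
  then have "a \<in> parents A \<rho>" by (simp add: parents_def)
  then have "parents A \<rho> \<noteq> {}" by blast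
  then have "card (parents A \<rho>) \<noteq> 0" using finite_parents by simp
  then show False using indeg_root by (simp add: indeg_def)
qed

lemma rtrancl_in_V: "(a, b) \<in> A\<^sup>* \<Longrightarrow> a \<in> V \<Longrightarrow> b \<in> V"
  by (induction rule: rtrancl_induct) (use arcs_subset in auto)

lemma rtrancl_antisym: "(a, b) \<in> A\<^sup>* \<Longrightarrow> (b, a) \<in> A\<^sup>* \<Longrightarrow> a = b"
  using acyclic_impl_antisym_rtrancl[OF acyclic_arcs] by (rule antisymD)

lemma rtrancl_dpath: "(a, b) \<in> A\<^sup>* \<Longrightarrow> a \<in> V \<Longrightarrow> \<exists>q. dpath V A q \<and> hd q = a \<and> last q = b"
  by (rule rtrancl_imp_dpath[OF _ _ arcs_subset])

lemma rpaths_iff: "p \<in> rpaths y \<longleftrightarrow> dpath V A p \<and> hd p = \<rho> \<and> last p = y"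
  by (simp add: root_paths_def)

lemma rpaths_exist: "y \<in> V \<Longrightarrow> \<exists>p. p \<in> rpaths y"
  using rtrancl_dpath[OF root_rtrancl root_in_V] by (auto simp: rpaths_iff)

lemma rpaths_root_mem: "p \<in> rpaths y \<Longrightarrow> \<rho> \<in> set p"
  by (auto simp: rpaths_iff dpath_def)

lemma rpaths_last_mem: "p \<in> rpaths y \<Longrightarrow> y \<in> set p"
  by (auto simp: rpaths_iff dpath_def)

lemma rpaths_target_in_V: "p \<in> rpaths y \<Longrightarrow> y \<in> V"
  by (auto simp: rpaths_iff dpath_def)

lemma rpaths_append:
  assumes "p \<in> rpaths v" "dpath V A q" "hd q = v" "last q = y"
  shows "\<exists>p'. p' \<in> rpaths y \<and> set p' = set p \<union> set q"
  using dpath_append[of V A p q] assms by (intro exI[of _ "p @ tl q"]) (auto simp: rpaths_iff)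

lemma rpaths_append_rtrancl:
  assumes "p \<in> rpaths v" "(v, y) \<in> A\<^sup>*"
  shows "\<exists>q p'. dpath V A q \<and> hd q = v \<and> last q = y \<and> p' \<in> rpaths y \<and> set p' = set p \<union> set q"
proof -
  have "v \<in> V" using rpaths_target_in_V assms by blast
  then obtain q where q: "dpath V A q" "hd q = v" "last q = y" using rtrancl_dpath assms by blast
  then show ?thesis using rpaths_append[OF assms(1) q] by blast
qed

lemma rpaths_prefix:
  assumes "p \<in> rpaths y" "v \<in> set p"
  shows "\<exists>p'. p' \<in> rpaths v \<and> set p' \<subseteq> set p"
proof -
  obtain i where i: "i < length p" "p ! i = v" using assms(2) by (metis in_set_conv_nth)
  have d: "dpath V A p" "hd p = \<rho>" using assms by (auto simp: rpaths_iff)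
  show ?thesis using dpath_take[OF d(1) i(1)] d i by (intro exI[of _ "take (Suc i) p"]) (auto simp: rpaths_iff)
qed

lemma rpaths_mem_rtrancl: "p \<in> rpaths y \<Longrightarrow> v \<in> set p \<Longrightarrow> (\<rho>, v) \<in> A\<^sup>* \<and> (v, y) \<in> A\<^sup>*"
  using dpath_mem_rtrancl by (fastforce simp: rpaths_iff)

lemma descendant_iff:
  assumes "y \<in> V"
  shows "descendant V A \<rho> y u \<longleftrightarrow> u \<in> V \<and> (u, y) \<in> A\<^sup>*"
proof
  assume "descendant V A \<rho> y u"
  then obtain p where p: "p \<in> rpaths y" "u \<in> set p" by (auto simp: descendant_def)
  then show "u \<in> V \<and> (u, y) \<in> A\<^sup>*" using rpaths_mem_rtrancl[OF p] by (auto simp: rpaths_iff dpath_def)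
next
  assume h: "u \<in> V \<and> (u, y) \<in> A\<^sup>*"
  obtain p where p: "p \<in> rpaths u" using rpaths_exist h by blast
  obtain q p' where "dpath V A q" "hd q = u" "last q = y" "p' \<in> rpaths y" "set p' = set p \<union> set q"
    using rpaths_append_rtrancl[OF p] h by blast
  then show "descendant V A \<rho> y u" using rpaths_last_mem[OF p] by (auto simp: descendant_def)
qed

lemma dominates_rtrancl:
  assumes h: "dominates u y" "y \<in> V"
  shows "u \<in> V \<and> (u, y) \<in> A\<^sup>*"
proof -
  obtain p where p: "p \<in> rpaths y" using rpaths_exist h by blast
  then have "u \<in> set p" using h by (simp add: root_dominates_def)
  then show ?thesis using rpaths_mem_rtrancl[OF p] p by (auto simp: rpaths_iff dpath_def)
qed

lemma Sset_iff: "x \<in> S u \<longleftrightarrow> x \<in> X \<and> dominates u (\<phi> x)"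
proof -
  { assume "x \<in> X" "dominates u (\<phi> x)"
    then have "descendant V A \<rho> (\<phi> x) u" using dominates_rtrancl descendant_iff label_in_V by blast }
  then show ?thesis
    by (auto simp: Sset_def strict_descendant_def root_dominates_def descendant_def)
qed

lemma Hset_iff: "x \<in> H u \<longleftrightarrow> x \<in> X \<and> u \<in> V \<and> (u, \<phi> x) \<in> A\<^sup>* \<and> \<not> dominates u (\<phi> x)"
proof -
  { fix x assume "x \<in> X"
    then have "descendant V A \<rho> (\<phi> x) u \<longleftrightarrow> u \<in> V \<and> (u, \<phi> x) \<in> A\<^sup>*" using descendant_iff label_in_V by blast
    moreover have "strict_descendant V A \<rho> (\<phi> x) u \<longleftrightarrow> descendant V A \<rho> (\<phi> x) u \<and> dominates u (\<phi> x)"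
      by (simp add: strict_descendant_def root_dominates_def)
    ultimately have "nonstrict_descendant V A \<rho> (\<phi> x) u \<longleftrightarrow> u \<in> V \<and> (u, \<phi> x) \<in> A\<^sup>* \<and> \<not> dominates u (\<phi> x)"
      by (auto simp: nonstrict_descendant_def) }
  then show ?thesis by (auto simp: Hset_def)
qed

lemma Sset_Un_Hset: "u \<in> V \<Longrightarrow> S u \<union> H u = cluster u"
  using dominates_rtrancl label_in_V by (auto simp: Sset_iff Hset_iff cluster_def)

lemma Sset_Hset_disjoint: "S u \<inter> H u = {}" by (auto simp: Sset_iff Hset_iff)

lemma dominates_trans:
  assumes "dominates w u" "dominates u y" "u \<in> V"
  shows "dominates w y"
  unfolding root_dominates_def
proof
  fix p assume p: "p \<in> rpaths y"
  then have "u \<in> set p" using assms(2) by (simp add: root_dominates_def)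
  then obtain p' where "p' \<in> rpaths u" "set p' \<subseteq> set p" using rpaths_prefix p by blast
  then show "w \<in> set p" using assms(1) by (auto simp: root_dominates_def)
qed

lemma not_dominates_avoiding: "\<not> dominates u y \<Longrightarrow> \<exists>P. P \<in> rpaths y \<and> u \<notin> set P"
  by (auto simp: root_dominates_def)

section \<open>Reticulation cycles in a cactus\<close>

lemma label_below: "v \<in> V \<Longrightarrow> \<exists>x\<in>X. (v, \<phi> x) \<in> A\<^sup>*"
proof -
  have wf: "wf (A\<inverse>)" by (rule finite_acyclic_wf_converse[OF finite_A acyclic_arcs])
  show "v \<in> V \<Longrightarrow> \<exists>x\<in>X. (v, \<phi> x) \<in> A\<^sup>*"
  proof (induction v rule: wf_induct[OF wf])
    fix v
    assume IH: "\<forall>y. (y, v) \<in> A\<inverse> \<longrightarrow> y \<in> V \<longrightarrow> (\<exists>x\<in>X. (y, \<phi> x) \<in> A\<^sup>*)"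
    assume vV: "v \<in> V"
    show "\<exists>x\<in>X. (v, \<phi> x) \<in> A\<^sup>*"
    proof (cases "children A v = {}")
      case True
      then have "is_leaf A v" by (simp add: is_leaf_def outdeg_def)
      then have "v \<in> \<phi> ` X" using labelled_if_leaf_or_unary vV by blast
      then obtain x where x: "x \<in> X" "v = \<phi> x" by blast
      have "(v, \<phi> x) \<in> A\<^sup>*" using x(2) by simp
      then show ?thesis using x(1) by (intro bexI[of _ x])
    next
      case False
      then obtain c where c: "(v, c) \<in> A" by (auto simp: children_def)
      then have "c \<in> V" using arcs_subset by blast
      moreover have "(c, v) \<in> A\<inverse>" using c by simp
      ultimately obtain x where x: "x \<in> X" "(c, \<phi> x) \<in> A\<^sup>*" using IH by blast
      have "(v, \<phi> x) \<in> A\<^sup>*" by (rule converse_rtrancl_into_rtrancl[OF c x(2)])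
      then show ?thesis using x(1) by (intro bexI[of _ x])
    qed
  qed
qed

lemma second_child:
  assumes "v \<in> V" "v \<notin> \<phi> ` X" "\<not> is_reticulation A v" "(v, s) \<in> A"
  shows "\<exists>d. (v, d) \<in> A \<and> d \<noteq> s"
proof -
  have t: "is_tree_vertex A v" using assms(3) by (simp add: is_tree_vertex_def is_reticulation_def)
  have "\<not> is_leaf A v" "outdeg A v \<noteq> 1" using labelled_if_leaf_or_unary[OF assms(1)] assms(2) t by auto
  moreover have "s \<in> children A v" using assms(4) by (simp add: children_def)
  moreover have "children A v \<noteq> {s}"
  proof
    assume "children A v = {s}"
    then have "outdeg A v = 1" by (simp add: outdeg_def)
    then show False using \<open>outdeg A v \<noteq> 1\<close> by simp
  qed
  ultimately obtain d where "d \<in> children A v" "d \<noteq> s" by blast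
  then show ?thesis by (auto simp: children_def)
qed

lemma avoiding_path_cycle:
  assumes P0: "P0 \<in> rpaths u" and Q: "dpath V A Q" "hd Q = u" "last Q = y"
    and P: "P \<in> rpaths y" "u \<notin> set P"
  shows "2 \<le> length Q \<and>
    (\<exists>Q1 Q2. cycle_paths V A Q1 Q2 \<and> (P0 ! (length P0 - 2), u) \<in> cycle_arcs Q1 Q2 \<and>
       (u, Q ! 1) \<in> cycle_arcs Q1 Q2 \<and> u \<noteq> hd Q1 \<and> last Q1 \<in> set Q \<and> last Q1 \<in> set P)"
proof -
  have dP0: "dpath V A P0" "hd P0 = \<rho>" "last P0 = u" using P0 by (auto simp: rpaths_iff)
  have dP: "dpath V A P" "hd P = \<rho>" "last P = y" using P by (auto simp: rpaths_iff)
  have two: "2 \<le> length p" if "dpath V A p" "hd p \<noteq> last p" for p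
    using that dpath_not_Nil[OF that(1)] by (cases p) (auto split: if_splits simp: Suc_le_eq)
  have "u \<noteq> \<rho>" "u \<noteq> y" using rpaths_root_mem[OF P(1)] rpaths_last_mem[OF P(1)] P(2) by auto
  then have l0: "2 \<le> length P0" and lQ: "2 \<le> length Q" using two dP0 Q by auto
  define P1 where "P1 = P0 @ tl Q"
  define k where "k = length P0 - 1"
  have d1: "dpath V A P1" "hd P1 = \<rho>" "last P1 = y"
    using dpath_append[OF dP0(1) Q(1)] dP0 Q by (simp_all add: P1_def)
  have len1: "length P1 = length P0 + length Q - 1" using lQ by (simp add: P1_def)
  have nth_k: "P1 ! k = u" using dP0 dpath_not_Nil[OF dP0(1)] by (simp add: P1_def k_def nth_append last_conv_nth)
  have "k - 1 = length P0 - 2" "length P0 - 2 < length P0" using l0 by (auto simp: k_def)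
  then have nth_pred: "P1 ! (k - 1) = P0 ! (length P0 - 2)" by (simp add: P1_def nth_append)
  have "Suc k = length P0" using l0 k_def by simp
  then have nth_succ: "P1 ! Suc k = Q ! 1" using lQ by (simp add: P1_def nth_append nth_tl)
  have nth_tail: "P1 ! b \<in> set Q" if "k < b" "b < length P1" for b
  proof -
    have "length P0 \<le> b" using that k_def by simp
    then have "P1 ! b = tl Q ! (b - length P0)" by (simp add: P1_def nth_append)
    moreover have "b - length P0 < length (tl Q)" using that len1 l0 k_def by simp
    ultimately show ?thesis by (metis list.set_sel(2) nth_mem tl_Nil less_nat_zero_code length_0_conv)
  qed
  have k: "k < length P1" "P1 ! k \<notin> set P" using l0 lQ len1 nth_k P(2) by (auto simp: k_def)
  have "hd P1 = hd P" "last P1 = last P" using d1 dP by simp_all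
  then obtain Q1 Q2 b where C: "cycle_paths V A Q1 Q2" "k < b" "b < length P1" "last Q1 = P1 ! b"
    "last Q1 \<in> set P" "P1 ! k \<noteq> hd Q1" "(P1 ! (k - 1), P1 ! k) \<in> path_arcs Q1"
    "(P1 ! k, P1 ! Suc k) \<in> path_arcs Q1"
    using diverging_dpaths_cycle_through[OF acyclic_arcs d1(1) dP(1) _ _ k] by blast
  then show ?thesis using nth_k nth_pred nth_succ nth_tail[OF C(2,3)] lQ by (intro conjI exI[of _ Q1] exI[of _ Q2]) auto
qed

lemma cycle_of_two_children_aux:
  assumes e: "(y, a) \<in> A" "(y, b) \<in> A" and qa: "dpath V A qa" "hd qa = a" "last qa = t"
    and qb: "dpath V A qb" "hd qb = b" "last qb = t" and na: "a \<notin> set (y # qb)"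
  shows "\<exists>Q1 Q2. cycle_paths V A Q1 Q2 \<and> hd Q1 = y \<and> (y, a) \<in> cycle_arcs Q1 Q2 \<and> (y, b) \<in> cycle_arcs Q1 Q2 \<and>
     (last Q1, t) \<in> A\<^sup>*"
proof -
  have yV: "y \<in> V" using e arcs_subset by blast
  have neA: "qa \<noteq> []" and neB: "qb \<noteq> []" using qa qb by (auto simp: dpath_def)
  have d1: "dpath V A (y # qa)" using yV e qa by (simp add: dpath_Cons)
  have d2: "dpath V A (y # qb)" using yV e qb by (simp add: dpath_Cons)
  have l1: "last (y # qa) = last (y # qb)" using qa qb neA neB by simp
  have k: "1 < length (y # qa)" using neA by simp
  have k2: "(y # qa) ! 1 \<notin> set (y # qb)" using na qa neA by (simp add: hd_conv_nth)
  obtain i j i' j' where c: "i < 1" "1 < j" "j < length (y # qa)" "i' < j'" "j' < length (y # qb)"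
    "(y # qa) ! i = (y # qb) ! i'" "(y # qa) ! j = (y # qb) ! j'"
    "cycle_paths V A (segment (y # qa) i j) (segment (y # qb) i' j')"
    using diverging_dpaths_cycle[OF acyclic_arcs d1 d2 _ l1 k k2] by auto
  have i0: "i = 0" using c by simp
  have dis2: "distinct (y # qb)" using acyclic_dpath_distinct[OF acyclic_arcs d2] .
  have "(y # qb) ! i' = (y # qb) ! 0" using c i0 by simp
  then have i'0: "i' = 0" using c by (subst (asm) nth_eq_iff_index_eq[OF dis2]) auto
  have h: "hd (segment (y # qa) i j) = y" using c i0 by (simp add: segment_hd)
  have a1: "((y # qa) ! 0, (y # qa) ! Suc 0) \<in> path_arcs (segment (y # qa) i j)" using c i0 by (intro segment_arc) auto
  have a2: "((y # qb) ! 0, (y # qb) ! Suc 0) \<in> path_arcs (segment (y # qb) i' j')" using c i'0 by (intro segment_arc) auto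
  have "(y # qa) ! Suc 0 = a" using qa neA by (simp add: hd_conv_nth)
  moreover have "(y # qb) ! Suc 0 = b" using qb neB by (simp add: hd_conv_nth)
  ultimately have arcs: "(y, a) \<in> path_arcs (segment (y # qa) i j)" "(y, b) \<in> path_arcs (segment (y # qb) i' j')"
    using a1 a2 by auto
  have "last (segment (y # qa) i j) = (y # qa) ! j" using c by (simp add: segment_last)
  moreover have "((y # qa) ! j, last (y # qa)) \<in> A\<^sup>*"
    using dpath_mem_rtrancl(2)[OF d1] c(3) by (meson nth_mem)
  ultimately have "(last (segment (y # qa) i j), t) \<in> A\<^sup>*" using qa neA by simp
  then show ?thesis using c(8) h arcs by blast
qed

lemma cycle_of_two_children:
  assumes e: "(y, a) \<in> A" "(y, b) \<in> A" "a \<noteq> b" and r: "(a, t) \<in> A\<^sup>*" "(b, t) \<in> A\<^sup>*"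
  shows "\<exists>Q1 Q2. cycle_paths V A Q1 Q2 \<and> hd Q1 = y \<and> (y, a) \<in> cycle_arcs Q1 Q2 \<and> (y, b) \<in> cycle_arcs Q1 Q2 \<and>
     (last Q1, t) \<in> A\<^sup>*"
proof -
  have aV: "a \<in> V" and bV: "b \<in> V" using e arcs_subset by auto
  obtain qa where qa: "dpath V A qa" "hd qa = a" "last qa = t" using rtrancl_dpath[OF r(1) aV] by blast
  obtain qb where qb: "dpath V A qb" "hd qb = b" "last qb = t" using rtrancl_dpath[OF r(2) bV] by blast
  show ?thesis
  proof (cases "a \<in> set (y # qb)")
    case False then show ?thesis using cycle_of_two_children_aux[OF e(1,2) qa qb] by blast
  next
    case True
    have ay: "a \<noteq> y" using e(1) acyclic_arcs by (auto simp: acyclic_def)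
    then have "a \<in> set qb" using True by simp
    then have ba: "(b, a) \<in> A\<^sup>*" using dpath_mem_rtrancl(1)[OF qb(1)] qb by metis
    have nb: "b \<notin> set (y # qa)"
    proof
      assume "b \<in> set (y # qa)"
      moreover have "b \<noteq> y" using e(2) acyclic_arcs by (auto simp: acyclic_def)
      ultimately have "b \<in> set qa" by simp
      then have "(a, b) \<in> A\<^sup>*" using dpath_mem_rtrancl(1)[OF qa(1)] qa by metis
      then show False using rtrancl_antisym ba e(3) by blast
    qed
    obtain Q1 Q2 where C: "cycle_paths V A Q1 Q2" "hd Q1 = y" "(y, b) \<in> cycle_arcs Q1 Q2" "(y, a) \<in> cycle_arcs Q1 Q2"
      "(last Q1, t) \<in> A\<^sup>*"
      using cycle_of_two_children_aux[OF e(2,1) qb qa nb] by blast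
    then show ?thesis by blast
  qed
qed

lemma cycle_of_two_parents_aux:
  assumes e: "(a, y) \<in> A" "(b, y) \<in> A" and pa: "pa \<in> rpaths a" and pb: "pb \<in> rpaths b"
    and na: "a \<notin> set (pb @ [y])"
  shows "\<exists>Q1 Q2. cycle_paths V A Q1 Q2 \<and> (a, y) \<in> cycle_arcs Q1 Q2 \<and> (b, y) \<in> cycle_arcs Q1 Q2"
proof -
  have yV: "y \<in> V" using e arcs_subset by blast
  have dpa: "dpath V A pa" "hd pa = \<rho>" "last pa = a" using pa by (auto simp: rpaths_iff)
  have dpb: "dpath V A pb" "hd pb = \<rho>" "last pb = b" using pb by (auto simp: rpaths_iff)
  have neA: "pa \<noteq> []" and neB: "pb \<noteq> []" using dpa dpb by (auto simp: dpath_def)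
  have ea: "dpath V A [a, y]" using e arcs_subset by (auto simp: dpath_def less_Suc_eq)
  have eb: "dpath V A [b, y]" using e arcs_subset by (auto simp: dpath_def less_Suc_eq)
  have apA: "dpath V A (pa @ tl [a, y]) \<and> hd (pa @ tl [a, y]) = hd pa \<and> last (pa @ tl [a, y]) = y"
    using dpath_append[OF dpa(1) ea] dpa by simp
  have apB: "dpath V A (pb @ tl [b, y]) \<and> hd (pb @ tl [b, y]) = hd pb \<and> last (pb @ tl [b, y]) = y"
    using dpath_append[OF dpb(1) eb] dpb by simp
  define P1 where "P1 = pa @ [y]"
  define P2 where "P2 = pb @ [y]"
  have d1: "dpath V A P1" "hd P1 = \<rho>" "last P1 = y" using apA dpa by (auto simp: P1_def)
  have d2: "dpath V A P2" "hd P2 = \<rho>" "last P2 = y" using apB dpb by (auto simp: P2_def)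
  define k where "k = length pa - 1"
  have kl: "k < length P1" by (simp add: P1_def k_def)
  have Pk: "P1 ! k = a" using neA dpa by (simp add: P1_def k_def nth_append last_conv_nth)
  have nk: "P1 ! k \<notin> set P2" using Pk na by (simp add: P2_def)
  obtain i j i' j' where c: "i < k" "k < j" "j < length P1" "i' < j'" "j' < length P2"
    "P1 ! i = P2 ! i'" "P1 ! j = P2 ! j'" "cycle_paths V A (segment P1 i j) (segment P2 i' j')"
    using diverging_dpaths_cycle[OF acyclic_arcs d1(1) d2(1) _ _ kl nk] d1 d2 by auto
  have jj: "j = k + 1" using c by (simp add: P1_def k_def)
  have Pj: "P1 ! j = y" using jj neA by (simp add: P1_def k_def nth_append)
  have dis2: "distinct P2" using acyclic_dpath_distinct[OF acyclic_arcs d2(1)] .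
  have "P2 ! j' = P2 ! (length P2 - 1)" using c Pj d2 by (metis last_conv_nth dpath_not_Nil[OF d2(1)])
  then have j'l: "j' = length P2 - 1" using c by (subst (asm) nth_eq_iff_index_eq[OF dis2]) auto
  have a1: "(P1 ! k, P1 ! Suc k) \<in> path_arcs (segment P1 i j)" using c jj by (intro segment_arc) auto
  have "P1 ! Suc k = y" using Pj jj by simp
  then have a1': "(a, y) \<in> path_arcs (segment P1 i j)" using a1 Pk by simp
  have lp2: "length P2 = length pb + 1" by (simp add: P2_def)
  have a2: "(P2 ! (j' - 1), P2 ! Suc (j' - 1)) \<in> path_arcs (segment P2 i' j')" using c by (intro segment_arc) auto
  have "Suc (j' - 1) = j'" using c by simp
  moreover have "P2 ! (j' - 1) = b" using j'l lp2 neB dpb by (simp add: P2_def nth_append last_conv_nth)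
  moreover have "P2 ! j' = y" using j'l lp2 by (simp add: P2_def nth_append)
  ultimately have a2': "(b, y) \<in> path_arcs (segment P2 i' j')" using a2 by simp
  show ?thesis using c(8) a1' a2' by blast
qed

lemma cycle_of_two_parents:
  assumes e: "(a, y) \<in> A" "(b, y) \<in> A" "a \<noteq> b"
  shows "\<exists>Q1 Q2. cycle_paths V A Q1 Q2 \<and> (a, y) \<in> cycle_arcs Q1 Q2 \<and> (b, y) \<in> cycle_arcs Q1 Q2"
proof -
  have aV: "a \<in> V" and bV: "b \<in> V" using e arcs_subset by auto
  obtain pa where pa: "pa \<in> rpaths a" using rpaths_exist aV by blast
  obtain pb where pb: "pb \<in> rpaths b" using rpaths_exist bV by blast
  have ay: "a \<noteq> y" using e(1) acyclic_arcs by (auto simp: acyclic_def)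
  have by': "b \<noteq> y" using e(2) acyclic_arcs by (auto simp: acyclic_def)
  show ?thesis
  proof (cases "a \<in> set (pb @ [y])")
    case False then show ?thesis using cycle_of_two_parents_aux[OF e(1,2) pa pb] by blast
  next
    case True
    then have "a \<in> set pb" using ay by simp
    then have ab: "(a, b) \<in> A\<^sup>*" using rpaths_mem_rtrancl[OF pb] by blast
    have "b \<notin> set (pa @ [y])"
    proof
      assume "b \<in> set (pa @ [y])"
      then have "b \<in> set pa" using by' by simp
      then have "(b, a) \<in> A\<^sup>*" using rpaths_mem_rtrancl[OF pa] by blast
      then show False using rtrancl_antisym ab e(3) by blast
    qed
    then show ?thesis using cycle_of_two_parents_aux[OF e(2,1) pb pa] by blast
  qed
qed

lemma cycle_non_sink_not_reticulation:
  assumes R: "cycle_paths V A R1 R2" and e: "(w, y) \<in> cycle_arcs R1 R2" and y: "y \<noteq> last R1"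
  shows "\<not> is_reticulation A y"
proof
  assume "is_reticulation A y"
  then obtain q where q: "(q, y) \<in> A" "q \<noteq> w" using reticulation_other_parent by blast
  have wy: "(w, y) \<in> A" using e R path_arcs_subset unfolding cycle_paths_def by blast
  obtain C1 C2 where C: "cycle_paths V A C1 C2" "(w, y) \<in> cycle_arcs C1 C2" "(q, y) \<in> cycle_arcs C1 C2"
    using cycle_of_two_parents[OF wy q(1) q(2)[symmetric]] by blast
  have "cycle_arcs C1 C2 = cycle_arcs R1 R2" using cycle_paths_share_arc[OF C(1) R C(2) e] .
  then have "y = last R1" using cycle_two_in_arcs_sink[OF acyclic_arcs R, of w y q] C q(2) by simp
  then show False using y by simp
qed

lemma cycle_non_source_no_merging_child:
  assumes R: "cycle_paths V A R1 R2" and e: "(u, s) \<in> cycle_arcs R1 R2" and u: "u \<noteq> hd R1"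
    and d: "(u, d) \<in> A" "d \<noteq> s" and t: "(s, t) \<in> A\<^sup>*" "(d, t) \<in> A\<^sup>*"
  shows False
proof -
  have us: "(u, s) \<in> A" using e R path_arcs_subset unfolding cycle_paths_def by blast
  obtain C1 C2 where C: "cycle_paths V A C1 C2" "(u, s) \<in> cycle_arcs C1 C2" "(u, d) \<in> cycle_arcs C1 C2"
    using cycle_of_two_children[OF us d(1) d(2)[symmetric] t] by blast
  have "cycle_arcs C1 C2 = cycle_arcs R1 R2" using cycle_paths_share_arc[OF C(1) R C(2) e] .
  then have "u = hd R1" using cycle_two_out_arcs_source[OF acyclic_arcs R, of u s d] C d(2) by simp
  then show False using u by simp
qed

section \<open>Strict and non-strict descendants\<close>

text \<open>When \<open>u\<close> has non-strict descendants, its merge point is the sink of the reticulation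
  cycle through the arc entering \<open>u\<close>; otherwise the condition holds vacuously.\<close>

definition merge_point :: "'v \<Rightarrow> 'v \<Rightarrow> bool" where
  "merge_point u z \<longleftrightarrow> (\<forall>y Q P. dpath V A Q \<and> hd Q = u \<and> last Q = y \<and> P \<in> rpaths y \<and> u \<notin> set P \<longrightarrow>
      z \<in> set Q \<and> z \<in> set P \<and> is_reticulation A z)"

lemma merge_point_exists:
  assumes uV: "u \<in> V"
  shows "\<exists>z. merge_point u z"
proof (cases "\<exists>y Q P. dpath V A Q \<and> hd Q = u \<and> last Q = y \<and> P \<in> rpaths y \<and> u \<notin> set P")
  case False then show ?thesis by (auto simp: merge_point_def)
next
  case True
  obtain P0 where P0: "P0 \<in> rpaths u" using rpaths_exist uV by blast
  obtain y0 Q0 Pa where i0: "dpath V A Q0" "hd Q0 = u" "last Q0 = y0" "Pa \<in> rpaths y0" "u \<notin> set Pa"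
    using True by blast
  obtain R1 R2 where R: "cycle_paths V A R1 R2" "(P0 ! (length P0 - 2), u) \<in> cycle_arcs R1 R2"
    "last R1 \<in> set Q0" "last R1 \<in> set Pa"
    using avoiding_path_cycle[OF P0 i0] by blast
  have "merge_point u (last R1)" unfolding merge_point_def
  proof (intro allI impI)
    fix y Q P assume i: "dpath V A Q \<and> hd Q = u \<and> last Q = y \<and> P \<in> rpaths y \<and> u \<notin> set P"
    then obtain Q1 Q2 where C: "cycle_paths V A Q1 Q2" "(P0 ! (length P0 - 2), u) \<in> cycle_arcs Q1 Q2"
      "last Q1 \<in> set Q" "last Q1 \<in> set P"
      using avoiding_path_cycle[OF P0] by blast
    have eq: "cycle_arcs Q1 Q2 = cycle_arcs R1 R2"
      using cycle_paths_share_arc[OF C(1) R(1) C(2) R(2)] .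
    obtain x1 x2 where x: "x1 \<noteq> x2" "(x1, last Q1) \<in> path_arcs Q1" "(x2, last Q1) \<in> path_arcs Q2"
      using cycle_sink_two_in_arcs[OF acyclic_arcs C(1)] by blast
    have "last Q1 = last R1"
      using cycle_two_in_arcs_sink[OF acyclic_arcs R(1), of x1 "last Q1" x2] x eq by blast
    moreover have "is_reticulation A (last Q1)"
    proof (rule two_parents_reticulation[of x1 _ x2])
      show "(x1, last Q1) \<in> A" using x(2) path_arcs_subset C(1) unfolding cycle_paths_def by blast
      show "(x2, last Q1) \<in> A" using x(3) path_arcs_subset C(1) unfolding cycle_paths_def by blast
      show "x1 \<noteq> x2" by fact
    qed
    ultimately show "last R1 \<in> set Q \<and> last R1 \<in> set P \<and> is_reticulation A (last R1)" using C by simp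
  qed
  then show ?thesis by blast
qed

lemma avoiding_rpath_extend:
  assumes "P \<in> rpaths z" "u \<notin> set P" "(z, y) \<in> A\<^sup>*" "(z, u) \<notin> A\<^sup>*"
  shows "\<exists>P'. P' \<in> rpaths y \<and> u \<notin> set P'"
proof -
  obtain q P' where q: "dpath V A q" "hd q = z" "last q = y" "P' \<in> rpaths y" "set P' = set P \<union> set q"
    using rpaths_append_rtrancl[OF assms(1,3)] by blast
  have "u \<notin> set q"
  proof
    assume "u \<in> set q"
    then have "(z, u) \<in> A\<^sup>*" using dpath_mem_rtrancl(1)[OF q(1)] q(2) by metis
    then show False using assms(4) by blast
  qed
  then show ?thesis using q assms(2) by blast
qed

lemma Hset_eq_cluster:
  assumes uV: "u \<in> V" and K: "merge_point u z" and Hne: "H u \<noteq> {}"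
  shows "H u = cluster z \<and> (u, z) \<in> A\<^sup>* \<and> (\<exists>P. P \<in> rpaths z \<and> u \<notin> set P) \<and> z \<noteq> u \<and> is_reticulation A z"
proof -
  have inst: "z \<in> set Q \<and> z \<in> set P \<and> is_reticulation A z"
    if "dpath V A Q" "hd Q = u" "last Q = y" "P \<in> rpaths y" "u \<notin> set P" for Q P y
    using K that unfolding merge_point_def by blast
  have hx: "\<exists>Q P. dpath V A Q \<and> hd Q = u \<and> last Q = \<phi> x \<and> P \<in> rpaths (\<phi> x) \<and> u \<notin> set P"
    if "x \<in> H u" for x
  proof -
    have x: "x \<in> X" "(u, \<phi> x) \<in> A\<^sup>*" "\<not> dominates u (\<phi> x)" using that by (auto simp: Hset_iff)
    obtain P where "P \<in> rpaths (\<phi> x)" "u \<notin> set P" using not_dominates_avoiding[OF x(3)] by blast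
    moreover obtain Q where "dpath V A Q" "hd Q = u" "last Q = \<phi> x" using rtrancl_dpath[OF x(2) uV] by blast
    ultimately show ?thesis by blast
  qed
  obtain x0 where x0: "x0 \<in> H u" using Hne by blast
  obtain Q0 P0 where i0: "dpath V A Q0" "hd Q0 = u" "last Q0 = \<phi> x0" "P0 \<in> rpaths (\<phi> x0)" "u \<notin> set P0"
    using hx[OF x0] by blast
  have zz: "z \<in> set Q0" "z \<in> set P0" "is_reticulation A z" using inst[OF i0] by auto
  have uz: "(u, z) \<in> A\<^sup>*" using dpath_mem_rtrancl(1)[OF i0(1) zz(1)] i0(2) by simp
  obtain Pz where Pz: "Pz \<in> rpaths z" "set Pz \<subseteq> set P0" using rpaths_prefix[OF i0(4) zz(2)] by blast
  have Pzu: "u \<notin> set Pz" using Pz i0(5) by blast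
  have zu: "z \<noteq> u" using zz(2) i0(5) by blast
  have zreach: "(z, u) \<notin> A\<^sup>*" using rtrancl_antisym uz zu by blast
  have "H u \<subseteq> cluster z"
  proof
    fix x assume x: "x \<in> H u"
    then obtain Q P where i: "dpath V A Q" "hd Q = u" "last Q = \<phi> x" "P \<in> rpaths (\<phi> x)" "u \<notin> set P"
      using hx by blast
    have "z \<in> set Q" using inst[OF i] by blast
    then have "(z, \<phi> x) \<in> A\<^sup>*" using dpath_mem_rtrancl(2)[OF i(1)] i(3) by metis
    then show "x \<in> cluster z" using x by (auto simp: cluster_def Hset_iff)
  qed
  moreover have "cluster z \<subseteq> H u"
  proof
    fix x assume x: "x \<in> cluster z"
    then have xX: "x \<in> X" and zx: "(z, \<phi> x) \<in> A\<^sup>*" by (auto simp: cluster_def)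
    obtain P' where "P' \<in> rpaths (\<phi> x)" "u \<notin> set P'" using avoiding_rpath_extend[OF Pz(1) Pzu zx zreach] by blast
    then have "\<not> dominates u (\<phi> x)" by (auto simp: root_dominates_def)
    moreover have "(u, \<phi> x) \<in> A\<^sup>*" using uz zx by simp
    ultimately show "x \<in> H u" using xX uV by (simp add: Hset_iff)
  qed
  ultimately show ?thesis using uz Pz Pzu zu zz(3) by blast
qed

lemma cluster_subset_Hset:
  assumes uV: "u \<in> V" and wV: "w \<in> V" and wu: "(w, u) \<in> A\<^sup>*" and nd: "\<not> dominates w u"
  shows "cluster u \<subseteq> H w"
proof
  fix x assume x: "x \<in> cluster u"
  then have xX: "x \<in> X" and ux: "(u, \<phi> x) \<in> A\<^sup>*" by (auto simp: cluster_def)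
  obtain P where P: "P \<in> rpaths u" "w \<notin> set P" using not_dominates_avoiding[OF nd] by blast
  have uw: "u \<noteq> w" using P rpaths_last_mem by blast
  then have "(u, w) \<notin> A\<^sup>*" using rtrancl_antisym wu by blast
  then obtain P' where "P' \<in> rpaths (\<phi> x)" "w \<notin> set P'" using avoiding_rpath_extend[OF P ux] by blast
  then have "\<not> dominates w (\<phi> x)" by (auto simp: root_dominates_def)
  moreover have "(w, \<phi> x) \<in> A\<^sup>*" using wu ux by simp
  ultimately show "x \<in> H w" using xX wV by (simp add: Hset_iff)
qed

lemma cluster_antimono: "(w, u) \<in> A\<^sup>* \<Longrightarrow> cluster u \<subseteq> cluster w"
  by (auto simp: cluster_def)

lemma Hset_eq_if_dominates:
  assumes uV: "u \<in> V" and wV: "w \<in> V" and dwu: "dominates w u" and K: "merge_point w z" and Hw: "H w \<noteq> {}"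
    and uz: "(u, z) \<in> A\<^sup>*"
  shows "H u = H w \<and> S u \<subseteq> S w"
proof -
  have Hc: "H w = cluster z" "(w, z) \<in> A\<^sup>*" "z \<noteq> w" and Pz0: "\<exists>P. P \<in> rpaths z \<and> w \<notin> set P"
    using Hset_eq_cluster[OF wV K Hw] by auto
  obtain Pz where Pz: "Pz \<in> rpaths z" "w \<notin> set Pz" using Pz0 by blast
  have uPz: "u \<notin> set Pz"
  proof
    assume "u \<in> set Pz"
    then obtain p' where "p' \<in> rpaths u" "set p' \<subseteq> set Pz" using rpaths_prefix Pz by blast
    then show False using dwu Pz(2) by (auto simp: root_dominates_def)
  qed
  have zV: "z \<in> V" using rtrancl_in_V uz uV by blast
  have zu: "z \<noteq> u" using rpaths_last_mem[OF Pz(1)] uPz by blast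
  have zreach: "(z, u) \<notin> A\<^sup>*" using rtrancl_antisym uz zu by blast
  obtain xl where xl: "xl \<in> X" "(z, \<phi> xl) \<in> A\<^sup>*" using label_below zV by blast
  obtain P' where "P' \<in> rpaths (\<phi> xl)" "u \<notin> set P'" using avoiding_rpath_extend[OF Pz(1) uPz xl(2) zreach] by blast
  then have "xl \<in> H u" using xl uz uV by (auto simp: Hset_iff root_dominates_def)
  then have Hu: "H u \<noteq> {}" by blast
  obtain zu where Ku: "merge_point u zu" using merge_point_exists uV by blast
  obtain Qu where Qu: "dpath V A Qu" "hd Qu = u" "last Qu = z" using rtrancl_dpath[OF uz uV] by blast
  have zuin: "zu \<in> set Qu" "zu \<in> set Pz" using Ku Qu Pz uPz unfolding merge_point_def by blast+
  have zuz: "(zu, z) \<in> A\<^sup>*" using dpath_mem_rtrancl(2)[OF Qu(1) zuin(1)] Qu by simp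
  have Hcu: "H u = cluster zu" "(u, zu) \<in> A\<^sup>*" using Hset_eq_cluster[OF uV Ku Hu] by auto
  obtain Pzu where Pzu: "Pzu \<in> rpaths zu" "set Pzu \<subseteq> set Pz" using rpaths_prefix[OF Pz(1) zuin(2)] by blast
  have wzu: "(w, zu) \<in> A\<^sup>*" using dominates_rtrancl[OF dwu uV] Hcu(2) rtrancl_trans by metis
  obtain Qw where Qw: "dpath V A Qw" "hd Qw = w" "last Qw = zu" using rtrancl_dpath[OF wzu wV] by blast
  have "z \<in> set Qw" using K Qw Pzu Pz(2) unfolding merge_point_def by blast
  then have "(z, zu) \<in> A\<^sup>*" using dpath_mem_rtrancl(2)[OF Qw(1)] Qw by metis
  then have "zu = z" using rtrancl_antisym zuz by blast
  then have "H u = H w" using Hcu Hc by simp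
  moreover have "S u \<subseteq> S w" using dominates_trans[OF dwu _ uV] by (auto simp: Sset_iff)
  ultimately show ?thesis by blast
qed

lemma cluster_subset_Sset_if_incomparable:
  assumes uV: "u \<in> V" and wV: "w \<in> V" and wu: "(w, u) \<in> A\<^sup>*" and K: "merge_point w z"
    and zu: "(z, u) \<notin> A\<^sup>*" and uz: "(u, z) \<notin> A\<^sup>*"
  shows "cluster u \<subseteq> S w"
proof
  fix x assume x: "x \<in> cluster u"
  then have ux: "(u, \<phi> x) \<in> A\<^sup>*" by (auto simp: cluster_def)
  have "x \<notin> H w"
  proof
    assume "x \<in> H w"
    then have "\<not> dominates w (\<phi> x)" by (simp add: Hset_iff)
    then obtain P where P: "P \<in> rpaths (\<phi> x)" "w \<notin> set P" using not_dominates_avoiding by blast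
    obtain q1 where q1: "dpath V A q1" "hd q1 = w" "last q1 = u" using rtrancl_dpath[OF wu wV] by blast
    obtain q2 where q2: "dpath V A q2" "hd q2 = u" "last q2 = \<phi> x" using rtrancl_dpath[OF ux uV] by blast
    have q: "dpath V A (q1 @ tl q2) \<and> hd (q1 @ tl q2) = hd q1 \<and> last (q1 @ tl q2) = last q2 \<and>
        set (q1 @ tl q2) = set q1 \<union> set q2" using dpath_append[OF q1(1) q2(1)] q1 q2 by simp
    have "z \<in> set (q1 @ tl q2)" using K q q1 q2 P unfolding merge_point_def by metis
    then consider "z \<in> set q1" | "z \<in> set q2" using q by blast
    then show False
    proof cases
      case 1
      then have "(z, u) \<in> A\<^sup>*" using dpath_mem_rtrancl(2)[OF q1(1)] q1 by metis
      then show False using zu by blast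
    next
      case 2
      then have "(u, z) \<in> A\<^sup>*" using dpath_mem_rtrancl(1)[OF q2(1)] q2 by metis
      then show False using uz by blast
    qed
  qed
  moreover have "x \<in> cluster w" using x cluster_antimono[OF wu] by blast
  ultimately show "x \<in> S w" using Sset_Un_Hset[OF wV] by blast
qed

lemma cluster_cases:
  assumes uV: "u \<in> V" and wV: "w \<in> V" and wu: "(w, u) \<in> A\<^sup>*"
  shows "cluster u \<subseteq> S w \<or> cluster u \<subseteq> H w \<or> (H u = H w \<and> H w \<noteq> {} \<and> S u \<subseteq> S w)"
proof (cases "dominates w u")
  case False then show ?thesis using cluster_subset_Hset[OF uV wV wu] by blast
next
  case dwu: True
  show ?thesis
  proof (cases "H w = {}")
    case True
    then show ?thesis using cluster_antimono[OF wu] Sset_Un_Hset[OF wV] by blast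
  next
    case Hw: False
    obtain z where K: "merge_point w z" using merge_point_exists wV by blast
    have Hc: "H w = cluster z" using Hset_eq_cluster[OF wV K Hw] by auto
    consider "(z, u) \<in> A\<^sup>*" | "(u, z) \<in> A\<^sup>*" | "(z, u) \<notin> A\<^sup>*" "(u, z) \<notin> A\<^sup>*" by blast
    then show ?thesis
    proof cases
      case 1 then show ?thesis using cluster_antimono[OF 1] Hc by blast
    next
      case 2 then show ?thesis using Hset_eq_if_dominates[OF uV wV dwu K Hw 2] Hw by blast
    next
      case 3 then show ?thesis using cluster_subset_Sset_if_incomparable[OF uV wV wu K] by blast
    qed
  qed
qed

lemma sp_le_ancestor:
  assumes uV: "u \<in> V" and wV: "w \<in> V" and wu: "(w, u) \<in> A\<^sup>*"
  shows "sp_le (S u, H u) (S w, H w)"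
    "H u \<noteq> {} \<Longrightarrow> sp_le (H u, {}) (S w, H w) \<or> (H w \<noteq> {} \<and> H u = H w)"
proof -
  have L: "S u \<union> H u = cluster u" using Sset_Un_Hset[OF uV] .
  note kc = cluster_cases[OF uV wV wu]
  show "sp_le (S u, H u) (S w, H w)"
  proof (cases "H u = H w \<and> H w \<noteq> {} \<and> S u \<subseteq> S w")
    case True
    then show ?thesis by (cases "S u = S w") (auto simp: sp_le_def)
  next
    case False
    then have "cluster u \<subseteq> S w \<or> cluster u \<subseteq> H w" using kc by blast
    then show ?thesis using L by (auto simp: sp_le_def)
  qed
  show "sp_le (H u, {}) (S w, H w) \<or> (H w \<noteq> {} \<and> H u = H w)" if "H u \<noteq> {}"
  proof (cases "H u = H w \<and> H w \<noteq> {} \<and> S u \<subseteq> S w")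
    case True then show ?thesis by blast
  next
    case False
    then have "cluster u \<subseteq> S w \<or> cluster u \<subseteq> H w" using kc by blast
    then show ?thesis using L by (auto simp: sp_le_def)
  qed
qed

lemma Sset_nonempty:
  assumes uV: "u \<in> V" and nr: "\<not> is_reticulation A u"
  shows "S u \<noteq> {}"
proof
  assume S0: "S u = {}"
  obtain x where "x \<in> X" "(u, \<phi> x) \<in> A\<^sup>*" using label_below uV by blast
  then have "x \<in> cluster u" by (simp add: cluster_def)
  then have "x \<in> H u" using Sset_Un_Hset[OF uV] S0 by blast
  then have Hne: "H u \<noteq> {}" by blast
  obtain z where K: "merge_point u z" using merge_point_exists uV by blast
  have Hc: "H u = cluster z" "(u, z) \<in> A\<^sup>*" "z \<noteq> u" and "\<exists>P. P \<in> rpaths z \<and> u \<notin> set P"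
    using Hset_eq_cluster[OF uV K Hne] by auto
  then obtain Pz where Pz: "Pz \<in> rpaths z" "u \<notin> set Pz" by blast
  have same_cluster: "cluster u = cluster z" using Sset_Un_Hset[OF uV] S0 Hc by simp
  have unlabelled: "u \<notin> \<phi> ` X"
  proof
    assume "u \<in> \<phi> ` X"
    then obtain x' where "x' \<in> X" "u = \<phi> x'" by blast
    then have "x' \<in> cluster u" by (simp add: cluster_def)
    then have "x' \<in> cluster z" using same_cluster by simp
    then have "(z, u) \<in> A\<^sup>*" using \<open>u = \<phi> x'\<close> by (simp add: cluster_def)
    then show False using rtrancl_antisym Hc by blast
  qed
  obtain P0 where P0: "P0 \<in> rpaths u" using rpaths_exist uV by blast
  obtain Q where Q: "dpath V A Q" "hd Q = u" "last Q = z" using rtrancl_dpath[OF Hc(2) uV] by blast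
  obtain R1 R2 where R: "cycle_paths V A R1 R2" "(u, Q ! 1) \<in> cycle_arcs R1 R2" "u \<noteq> hd R1"
    and lQ: "2 \<le> length Q"
    using avoiding_path_cycle[OF P0 Q Pz] by blast
  have us: "(u, Q ! 1) \<in> A" using R(1,2) path_arcs_subset unfolding cycle_paths_def by blast
  have "(Q ! 1, z) \<in> A\<^sup>*" using dpath_mem_rtrancl(2)[OF Q(1)] Q(3) lQ by simp
  obtain d where d: "(u, d) \<in> A" "d \<noteq> Q ! 1" using second_child[OF uV unlabelled nr us] by blast
  have "d \<in> V" using d(1) arcs_subset by blast
  then obtain xd where xd: "xd \<in> X" "(d, \<phi> xd) \<in> A\<^sup>*" using label_below by blast
  have "(u, \<phi> xd) \<in> A\<^sup>*" using d(1) xd(2) by (rule converse_rtrancl_into_rtrancl)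
  then have "xd \<in> cluster u" using xd(1) by (simp add: cluster_def)
  then have "xd \<in> cluster z" using same_cluster by blast
  then have "(z, \<phi> xd) \<in> A\<^sup>*" by (simp add: cluster_def)
  then have "(Q ! 1, \<phi> xd) \<in> A\<^sup>*" using \<open>(Q ! 1, z) \<in> A\<^sup>*\<close> by (rule rtrancl_trans[rotated])
  then show False using cycle_non_source_no_merging_child[OF R d] xd(2) by blast
qed

text \<open>The second vertex on the longer side of the cycle is an unlabelled tree vertex; a label
  below its other child would lie below \<open>u\<close>, closing a second reticulation cycle through it.\<close>

lemma no_cycle_above_cluster_aux:
  assumes cd: "cycle_paths V A Q1 Q2" and l3: "3 \<le> length Q1" and lu: "(last Q1, u) \<in> A\<^sup>*"
    and labels: "\<forall>x\<in>X. (hd Q1, \<phi> x) \<in> A\<^sup>* \<longrightarrow> (u, \<phi> x) \<in> A\<^sup>*"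
  shows False
proof -
  have dQ: "dpath V A Q1" using cd by (simp add: cycle_paths_def)
  have dis: "distinct Q1" using acyclic_dpath_distinct[OF acyclic_arcs dQ] .
  define y where "y = Q1 ! 1"
  define s where "s = Q1 ! 2"
  have wy: "(hd Q1, y) \<in> path_arcs Q1" unfolding in_path_arcs_iff y_def
    using l3 dpath_not_Nil[OF dQ] by (intro exI[of _ 0]) (simp add: hd_conv_nth)
  have ys: "(y, s) \<in> path_arcs Q1" unfolding in_path_arcs_iff y_def s_def
    using l3 by (intro exI[of _ 1]) (simp add: numeral_2_eq_2)
  have yhd: "y \<noteq> hd Q1" using path_arcs_target_neq_hd[OF dis wy] .
  have ylast: "y \<noteq> last Q1" using path_arcs_source_neq_last[OF dis ys] .
  have yin: "y \<in> set Q1" using path_arcs_mem[OF ys] by blast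
  have ylst: "(y, last Q1) \<in> A\<^sup>*" and slst: "(s, last Q1) \<in> A\<^sup>*"
    using dpath_mem_rtrancl(2)[OF dQ] path_arcs_mem[OF ys] by auto
  have ysA: "(y, s) \<in> A" using ys path_arcs_subset[OF dQ] by blast
  have nr: "\<not> is_reticulation A y" using cycle_non_sink_not_reticulation[OF cd _ ylast] wy by blast
  have nl: "y \<notin> \<phi> ` X"
  proof
    assume "y \<in> \<phi> ` X"
    then obtain x where "x \<in> X" "y = \<phi> x" by blast
    then have "(u, y) \<in> A\<^sup>*" using labels dpath_mem_rtrancl(1)[OF dQ yin] by blast
    moreover have "(y, u) \<in> A\<^sup>*" using ylst lu by (rule rtrancl_trans)
    ultimately have "(last Q1, y) \<in> A\<^sup>*" using lu rtrancl_antisym by metis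
    then show False using rtrancl_antisym[OF ylst] ylast by blast
  qed
  obtain d where d: "(y, d) \<in> A" "d \<noteq> s" using second_child[OF _ nl nr ysA] ysA arcs_subset by blast
  have "d \<in> V" using d(1) arcs_subset by blast
  then obtain xd where xd: "xd \<in> X" "(d, \<phi> xd) \<in> A\<^sup>*" using label_below by blast
  have "(y, \<phi> xd) \<in> A\<^sup>*" using d(1) xd(2) by (rule converse_rtrancl_into_rtrancl)
  then have "(hd Q1, \<phi> xd) \<in> A\<^sup>*" using dpath_mem_rtrancl(1)[OF dQ yin] by (rule rtrancl_trans[rotated])
  then have "(u, \<phi> xd) \<in> A\<^sup>*" using labels xd(1) by blast
  then have "(s, \<phi> xd) \<in> A\<^sup>*" using slst lu by (meson rtrancl_trans)
  then show False using cycle_non_source_no_merging_child[OF cd _ yhd d] ys xd(2) by blast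
qed

lemma no_cycle_above_cluster:
  assumes cd: "cycle_paths V A Q1 Q2" and lu: "(last Q1, u) \<in> A\<^sup>*"
    and labels: "\<forall>x\<in>X. (hd Q1, \<phi> x) \<in> A\<^sup>* \<longrightarrow> (u, \<phi> x) \<in> A\<^sup>*"
  shows False
proof -
  have eq: "hd Q1 = hd Q2" "last Q1 = last Q2" using cd by (auto simp: cycle_paths_def)
  consider "3 \<le> length Q1" | "3 \<le> length Q2" using cycle_paths_length(4)[OF acyclic_arcs cd] by blast
  then show False
  proof cases
    case 1 show False by (rule no_cycle_above_cluster_aux[OF cd 1 lu labels])
  next
    case 2 then show False using no_cycle_above_cluster_aux[OF cycle_paths_sym[OF cd] 2] lu labels eq by simp
  qed
qed

lemma Sset_root: "S \<rho> = X"
proof -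
  have "x \<in> S \<rho>" if "x \<in> X" for x
    using that rpaths_root_mem by (auto simp: Sset_iff root_dominates_def)
  moreover have "S \<rho> \<subseteq> X" by (auto simp: Sset_iff)
  ultimately show ?thesis by blast
qed

lemma Hset_root: "H \<rho> = {}"
proof -
  have "H \<rho> \<subseteq> X" by (auto simp: Hset_iff)
  then show ?thesis using Sset_Hset_disjoint[of \<rho>] Sset_root by blast
qed

lemma dominates_imp_ancestor:
  assumes uV: "u \<in> V" and xX: "x \<in> X" and dw: "dominates w (\<phi> x)" and ux: "(u, \<phi> x) \<in> A\<^sup>*"
    and nuw: "(u, w) \<notin> A\<^sup>*"
  shows "(w, u) \<in> A\<^sup>*"
proof -
  obtain P0 where P0: "P0 \<in> rpaths u" using rpaths_exist uV by blast
  obtain q where q: "dpath V A q" "hd q = u" "last q = \<phi> x" using rtrancl_dpath[OF ux uV] by blast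
  obtain P where P: "P \<in> rpaths (\<phi> x)" "set P = set P0 \<union> set q" using rpaths_append[OF P0 q] by blast
  have "w \<in> set P" using dw P(1) unfolding root_dominates_def by blast
  then have "w \<in> set P0 \<or> w \<in> set q" using P(2) by blast
  then show ?thesis
  proof
    assume "w \<in> set P0" then show ?thesis using rpaths_mem_rtrancl[OF P0] by blast
  next
    assume "w \<in> set q" then have "(u, w) \<in> A\<^sup>*" using dpath_mem_rtrancl(1)[OF q(1)] q by metis
    then show ?thesis using nuw by blast
  qed
qed

lemma merge_point_incomparable:
  assumes uV: "u \<in> V" and wV: "w \<in> V" and nuw: "(u, w) \<notin> A\<^sup>*" and nwu: "(w, u) \<notin> A\<^sup>*"
    and K: "merge_point u z" and xu: "(u, \<phi> x) \<in> A\<^sup>*" and xw: "(w, \<phi> x) \<in> A\<^sup>*"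
  shows "(w, z) \<in> A\<^sup>* \<and> (\<exists>P \<in> rpaths z. w \<notin> set P)"
proof -
  obtain P0w where P0w: "P0w \<in> rpaths w" using rpaths_exist wV by blast
  obtain P0u where P0u: "P0u \<in> rpaths u" using rpaths_exist uV by blast
  obtain Qw where Qw: "dpath V A Qw" "hd Qw = w" "last Qw = \<phi> x" using rtrancl_dpath[OF xw wV] by blast
  obtain Qu where Qu: "dpath V A Qu" "hd Qu = u" "last Qu = \<phi> x" using rtrancl_dpath[OF xu uV] by blast
  obtain Pw where Pw: "Pw \<in> rpaths (\<phi> x)" "set Pw = set P0w \<union> set Qw" using rpaths_append[OF P0w Qw] by blast
  obtain Pu where Pu: "Pu \<in> rpaths (\<phi> x)" "set Pu = set P0u \<union> set Qu" using rpaths_append[OF P0u Qu] by blast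
  have below_w: "(v, w) \<in> A\<^sup>* \<or> (w, v) \<in> A\<^sup>*" if "v \<in> set Pw" for v
    using that Pw(2) rpaths_mem_rtrancl[OF P0w] dpath_mem_rtrancl(1)[OF Qw(1)] Qw(2) by blast
  have below_u: "(v, u) \<in> A\<^sup>* \<or> (u, v) \<in> A\<^sup>*" if "v \<in> set Pu" for v
    using that Pu(2) rpaths_mem_rtrancl[OF P0u] dpath_mem_rtrancl(1)[OF Qu(1)] Qu(2) by blast
  have "u \<notin> set Pw" using below_w nuw nwu by blast
  then have z: "z \<in> set Qu" "z \<in> set Pw" using K Qu Pw unfolding merge_point_def by blast+
  have uz: "(u, z) \<in> A\<^sup>*" using dpath_mem_rtrancl(1)[OF Qu(1) z(1)] Qu(2) by simp
  have "(w, z) \<in> A\<^sup>*" using below_w[OF z(2)] uz nuw rtrancl_trans by metis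
  moreover obtain Pz where "Pz \<in> rpaths z" "set Pz \<subseteq> set Pu"
    using rpaths_prefix[OF Pu(1)] z(1) Pu(2) by blast
  moreover have "w \<notin> set Pu" using below_u nuw nwu by blast
  ultimately show ?thesis by blast
qed

lemma merge_points_eq_if_incomparable:
  assumes uV: "u \<in> V" and wV: "w \<in> V" and nuw: "(u, w) \<notin> A\<^sup>*" and nwu: "(w, u) \<notin> A\<^sup>*"
    and Ku: "merge_point u zu" and Kw: "merge_point w zw"
    and xu: "(u, \<phi> x) \<in> A\<^sup>*" and xw: "(w, \<phi> x) \<in> A\<^sup>*"
  shows "zu = zw"
proof -
  have merge_below: "(z', z) \<in> A\<^sup>*"
    if hyps: "v \<in> V" "v' \<in> V" "(v, v') \<notin> A\<^sup>*" "(v', v) \<notin> A\<^sup>*" "merge_point v z"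
      "merge_point v' z'" "(v, \<phi> x) \<in> A\<^sup>*" "(v', \<phi> x) \<in> A\<^sup>*" for v v' z z'
  proof -
    obtain P where v'z: "(v', z) \<in> A\<^sup>*" and P: "P \<in> rpaths z" "v' \<notin> set P"
      using merge_point_incomparable[OF hyps(1-5,7,8)] by blast
    obtain Q where Q: "dpath V A Q" "hd Q = v'" "last Q = z" using rtrancl_dpath[OF v'z hyps(2)] by blast
    then have "z' \<in> set Q" using hyps(6) P unfolding merge_point_def by blast
    then show ?thesis using dpath_mem_rtrancl(2)[OF Q(1)] Q(3) by simp
  qed
  show ?thesis
    using merge_below[OF wV uV nwu nuw Kw Ku xw xu] merge_below[OF uV wV nuw nwu Ku Kw xu xw]
    by (rule rtrancl_antisym)
qed

lemma Sset_Hset_pair_neq_Hset_pair: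
  assumes uV: "u \<in> V" and wV: "w \<in> V" and nuw: "(u, w) \<notin> A\<^sup>*"
    and nr: "\<not> is_reticulation A u" "\<not> is_reticulation A w"
  shows "(S w, H w) \<noteq> (H u, {})"
proof
  assume eq: "(S w, H w) = (H u, {})"
  obtain x where x: "x \<in> S w" using Sset_nonempty[OF wV nr(2)] by blast
  then have "x \<in> X" "dominates w (\<phi> x)" "(u, \<phi> x) \<in> A\<^sup>*" using eq by (auto simp: Sset_iff Hset_iff)
  then have "(w, u) \<in> A\<^sup>*" using dominates_imp_ancestor[OF uV] nuw by blast
  then have "cluster u \<subseteq> S w \<union> H w" using cluster_antimono Sset_Un_Hset[OF wV] by blast
  then have "S u \<subseteq> H u" using eq Sset_Un_Hset[OF uV] by auto
  then show False using Sset_Hset_disjoint[of u] Sset_nonempty[OF uV nr(1)] by blast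
qed

text \<open>If \<open>w\<close> is a proper ancestor of \<open>u\<close> with the same pair as \<open>u\<close>, a child \<open>c\<close> of \<open>w\<close>
  avoiding \<open>u\<close> would carry a label in \<open>H u = H w\<close>; the reticulation cycle witnessing this
  would pass through \<open>(w, c)\<close> without starting at \<open>w\<close>, contradicting the child towards \<open>u\<close>.\<close>

lemma child_reaches_if_pairs_eq:
  assumes uV: "u \<in> V" and wV: "w \<in> V" and nuw: "(u, w) \<notin> A\<^sup>*"
    and c: "(w, c) \<in> A" "(w, c') \<in> A" "c \<noteq> c'" and c'u: "(c', u) \<in> A\<^sup>*"
    and eq: "(S w, H w) = (S u, H u)"
  shows "(c, u) \<in> A\<^sup>*"
proof (rule ccontr)
  assume cu: "(c, u) \<notin> A\<^sup>*"
  have same_cluster: "cluster u = cluster w" using Sset_Un_Hset[OF uV] Sset_Un_Hset[OF wV] eq by simp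
  have cV: "c \<in> V" using c arcs_subset by blast
  obtain xl where xl: "xl \<in> X" "(c, \<phi> xl) \<in> A\<^sup>*" using label_below cV by blast
  obtain qc where qc: "dpath V A qc" "hd qc = c" "last qc = \<phi> xl" using rtrancl_dpath[OF xl(2) cV] by blast
  define Q where "Q = w # qc"
  have Q: "dpath V A Q" "hd Q = w" "last Q = \<phi> xl" "Q ! 1 = c"
    using qc c wV dpath_not_Nil[OF qc(1)] by (auto simp: Q_def dpath_Cons hd_conv_nth)
  obtain P0w where P0w: "P0w \<in> rpaths w" using rpaths_exist wV by blast
  obtain P where P: "P \<in> rpaths (\<phi> xl)" "set P = set P0w \<union> set Q" using rpaths_append[OF P0w Q(1-3)] by blast
  have "u \<notin> set P"
  proof
    assume "u \<in> set P"
    then consider "u \<in> set P0w" | "u = w" | "u \<in> set qc" using P by (auto simp: Q_def)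
    then show False
    proof cases
      case 1 then show False using rpaths_mem_rtrancl[OF P0w] nuw by blast
    next
      case 2 then show False using nuw by simp
    next
      case 3 then show False using dpath_mem_rtrancl(1)[OF qc(1)] qc(2) cu by metis
    qed
  qed
  then have "\<not> dominates u (\<phi> xl)" using P by (auto simp: root_dominates_def)
  moreover have "(w, \<phi> xl) \<in> A\<^sup>*" using c(1) xl(2) by (rule converse_rtrancl_into_rtrancl)
  then have "xl \<in> cluster u" using xl(1) same_cluster by (simp add: cluster_def)
  then have uxl: "(u, \<phi> xl) \<in> A\<^sup>*" by (simp add: cluster_def)
  ultimately have "xl \<in> H w" using xl(1) uV eq by (simp add: Hset_iff)
  then have "\<not> dominates w (\<phi> xl)" by (simp add: Hset_iff)
  then obtain P' where P': "P' \<in> rpaths (\<phi> xl)" "w \<notin> set P'" using not_dominates_avoiding by blast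
  obtain R1 R2 where R: "cycle_paths V A R1 R2" "(w, Q ! 1) \<in> cycle_arcs R1 R2" "w \<noteq> hd R1"
    using avoiding_path_cycle[OF P0w Q(1-3) P'] by blast
  have "(c', \<phi> xl) \<in> A\<^sup>*" using c'u uxl by (rule rtrancl_trans)
  then show False using cycle_non_source_no_merging_child[OF R(1) _ R(3) c(2) c(3)[symmetric]] R(2) Q(4) xl(2)
    by simp
qed

lemma Sset_Hset_pair_neq:
  assumes uV: "u \<in> V" and wV: "w \<in> V" and nuw: "(u, w) \<notin> A\<^sup>*"
    and nr: "\<not> is_reticulation A w" and nl: "w \<notin> \<phi> ` X"
  shows "(S w, H w) \<noteq> (S u, H u)"
proof
  assume eq: "(S w, H w) = (S u, H u)"
  obtain x where x: "x \<in> S w" using Sset_nonempty[OF wV nr] by blast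
  then have "x \<in> X" "dominates w (\<phi> x)" "dominates u (\<phi> x)" using eq by (auto simp: Sset_iff)
  then have "(u, \<phi> x) \<in> A\<^sup>*" using dominates_rtrancl label_in_V by blast
  then have wu: "(w, u) \<in> A\<^sup>*" using dominates_imp_ancestor[OF uV] x nuw \<open>x \<in> X\<close> \<open>dominates w (\<phi> x)\<close>
    by blast
  have "u \<noteq> w" using nuw by auto
  then obtain c' where c': "(w, c') \<in> A" "(c', u) \<in> A\<^sup>*" using wu by (metis converse_rtranclE)
  obtain c where c: "(w, c) \<in> A" "c \<noteq> c'" using second_child[OF wV nl nr c'(1)] by blast
  have "(c, u) \<in> A\<^sup>*" using child_reaches_if_pairs_eq[OF uV wV nuw c(1) c'(1) c(2) c'(2) eq] .
  then obtain Q1 Q2 where C: "cycle_paths V A Q1 Q2" "hd Q1 = w" "(last Q1, u) \<in> A\<^sup>*"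
    using cycle_of_two_children[OF c'(1) c(1) c(2)[symmetric] c'(2)] by blast
  have "(u, \<phi> y) \<in> A\<^sup>*" if "y \<in> X" "(w, \<phi> y) \<in> A\<^sup>*" for y
  proof -
    have "y \<in> cluster w" using that by (simp add: cluster_def)
    then have "y \<in> cluster u" using eq Sset_Un_Hset[OF uV] Sset_Un_Hset[OF wV] by simp
    then show ?thesis by (simp add: cluster_def)
  qed
  then show False using no_cycle_above_cluster[OF C(1) C(3)] C(2) by blast
qed

lemma Hset_eq_on_path_to_merge_point:
  assumes wV: "w \<in> V" and K: "merge_point w z" and Hw: "H w \<noteq> {}"
    and Q: "dpath V A Q" "hd Q = w" "last Q = z" and v: "v \<in> set Q" "v \<noteq> z"
  shows "H v = H w"
proof -
  obtain m where m: "m < length Q" "Q ! m = v" using v(1) by (metis in_set_conv_nth)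
  note prefix = dpath_take[OF Q(1) m(1)]
  have vz: "(v, z) \<in> A\<^sup>*" using dpath_mem_rtrancl(2)[OF Q(1) v(1)] Q(3) by simp
  have wv: "(w, v) \<in> A\<^sup>*" using dpath_mem_rtrancl(1)[OF Q(1) v(1)] Q(2) by simp
  have "dominates w v"
  proof (rule ccontr)
    assume "\<not> dominates w v"
    then obtain P where "P \<in> rpaths v" "w \<notin> set P" using not_dominates_avoiding by blast
    then have "z \<in> set (take (Suc m) Q)" using K prefix Q(2) m(2) unfolding merge_point_def by blast
    then have "(z, v) \<in> A\<^sup>*" using dpath_mem_rtrancl(2)[OF prefix(1)] prefix(3) m(2) by metis
    then show False using rtrancl_antisym vz v(2) by blast
  qed
  then show ?thesis using Hset_eq_if_dominates[OF rtrancl_in_V[OF wv wV] wV _ K Hw vz] by blast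
qed

end

section \<open>Levels of a ranking\<close>

lemma sp_le_refl: "sp_le P P"
  by (cases P) (simp add: sp_le_def)

locale ranked_cactus_graph = rooted_cactus_graph +
  fixes r :: "_ \<Rightarrow> real"
  assumes ranking: "ranking X V A \<phi> r"
begin

abbreviation "\<sigma> \<equiv> size_ts V r"
abbreviation "Vl \<equiv> Vlevel V A r"
abbreviation "SP \<equiv> SPS X V A \<rho> \<phi> r"

lemma rank_time_stamp: "time_stamp X V A \<phi> r" using ranking by (simp add: ranking_def)
lemma rank_image: "r ` V = real ` {0..\<sigma>}" using ranking by (simp add: ranking_def)
lemma rank_label: "x \<in> X \<Longrightarrow> r (\<phi> x) = 0" using rank_time_stamp by (simp add: time_stamp_def)
lemma rank_tree_arc: "(u, v) \<in> A \<Longrightarrow> \<not> is_reticulation A v \<Longrightarrow> r v < r u"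
  using rank_time_stamp unfolding time_stamp_def by blast
lemma rank_reticulation_arc:
  assumes a: "(u, v) \<in> A" "is_reticulation A v"
  shows "r u = r v"
proof -
  have "v \<in> V" "u \<in> parents A v" using a arcs_subset by (auto simp: parents_def)
  then show ?thesis using rank_time_stamp a unfolding time_stamp_def by blast
qed
lemma rank_arc: "(u, v) \<in> A \<Longrightarrow> r v \<le> r u"
  using rank_tree_arc rank_reticulation_arc by (metis less_imp_le order_refl)
lemma rank_rtrancl: "(u, v) \<in> A\<^sup>* \<Longrightarrow> r v \<le> r u"
  by (induction rule: rtrancl_induct) (auto dest: rank_arc)

lemma Vlevel_iff: "u \<in> Vl i \<longleftrightarrow> u \<in> V \<and> r u \<le> real i \<and> (\<forall>p. (p, u) \<in> A \<longrightarrow> r p > real i)"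
  by (auto simp: Vlevel_def parents_def)

lemma Vlevel_not_reticulation: "u \<in> Vl i \<Longrightarrow> \<not> is_reticulation A u"
proof
  assume u: "u \<in> Vl i" "is_reticulation A u"
  then obtain q where q: "(q, u) \<in> A" using reticulation_other_parent by blast
  then have "r q = r u" using rank_reticulation_arc u(2) by blast
  moreover have "r q > real i" "r u \<le> real i" using u(1) q by (auto simp: Vlevel_iff)
  ultimately show False by simp
qed

lemma rank_le_size:
  assumes "v \<in> V"
  shows "r v \<le> real \<sigma>"
proof -
  have "r v \<in> real ` {0..\<sigma>}" using rank_image assms by blast
  then show ?thesis by auto
qed

lemma rank_above_Vlevel:
  assumes "(u, w) \<in> A\<^sup>*" "u \<noteq> w" "w \<in> Vl j"
  shows "r u > real j"
proof -
  obtain p where p: "(u, p) \<in> A\<^sup>*" "(p, w) \<in> A" using assms(1,2) by (meson rtranclE)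
  then have "r p > real j" using assms(3) by (simp add: Vlevel_iff)
  moreover have "r p \<le> r u" using rank_rtrancl[OF p(1)] .
  ultimately show ?thesis by simp
qed

lemma dpath_meets_Vlevel:
  assumes dQ: "dpath V A Q" and last: "r (last Q) \<le> real j"
    and hd: "r (hd Q) > real j \<or> hd Q \<in> Vl j"
  shows "\<exists>m < length Q. Q ! m \<in> Vl j"
proof (cases "hd Q \<in> Vl j")
  case True
  have "Q \<noteq> []" using dQ by (simp add: dpath_def)
  then show ?thesis using True by (intro exI[of _ 0]) (simp add: hd_conv_nth)
next
  case False
  then have h: "r (Q ! 0) > real j" using hd dQ by (simp add: hd_conv_nth dpath_def)
  have ne: "Q \<noteq> []" using dQ by (simp add: dpath_def)
  define m where "m = (LEAST m. m < length Q \<and> r (Q ! m) \<le> real j)"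
  have ex: "length Q - 1 < length Q \<and> r (Q ! (length Q - 1)) \<le> real j"
    using last ne by (simp add: last_conv_nth)
  have mP: "m < length Q \<and> r (Q ! m) \<le> real j" unfolding m_def by (rule LeastI[of "\<lambda>m. m < length Q \<and> r (Q ! m) \<le> real j", OF ex])
  have m0: "m \<noteq> 0"
  proof
    assume "m = 0" then show False using mP h by simp
  qed
  have prev: "\<not> (m - 1 < length Q \<and> r (Q ! (m - 1)) \<le> real j)"
    unfolding m_def by (rule not_less_Least) (use m0 m_def in simp)
  then have rpaths: "r (Q ! (m - 1)) > real j" using mP by auto
  have arc: "(Q ! (m - 1), Q ! m) \<in> A" using dQ mP m0 unfolding dpath_def
    by (metis Suc_pred' not_gr_zero)
  have nr: "\<not> is_reticulation A (Q ! m)"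
  proof
    assume "is_reticulation A (Q ! m)"
    then have "r (Q ! (m - 1)) = r (Q ! m)" using rank_reticulation_arc arc by blast
    then show False using rpaths mP by simp
  qed
  have par: "parents A (Q ! m) = {Q ! (m - 1)}" using parents_non_reticulation[OF nr arc] .
  have "Q ! m \<in> V" using dQ mP by (auto simp: dpath_def)
  then have "Q ! m \<in> Vl j" using par rpaths mP by (auto simp: Vlevel_def)
  then show ?thesis using mP by blast
qed

lemma Vlevel_ancestor:
  assumes u: "u \<in> Vl i" and ij: "i \<le> j"
  shows "\<exists>w \<in> Vl j. (w, u) \<in> A\<^sup>*"
proof -
  have uV: "u \<in> V" using u by (simp add: Vlevel_iff)
  obtain P where P: "P \<in> rpaths u" using rpaths_exist uV by blast
  have dP: "dpath V A P" "hd P = \<rho>" "last P = u" using P by (auto simp: rpaths_iff)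
  have lst: "r (last P) \<le> real j" using u dP ij by (auto simp: Vlevel_iff)
  have "r (hd P) > real j \<or> hd P \<in> Vl j"
  proof (cases "r \<rho> > real j")
    case False
    then have "\<rho> \<in> Vl j" using root_in_V no_arc_into_root by (auto simp: Vlevel_iff)
    then show ?thesis using dP by simp
  qed (use dP in simp)
  then obtain m where m: "m < length P" "P ! m \<in> Vl j" using dpath_meets_Vlevel[OF dP(1) lst] by blast
  have "(P ! m, P ! (length P - 1)) \<in> A\<^sup>*" using dpath_nth_rtrancl[OF dP(1)] m by simp
  moreover have "P ! (length P - 1) = u" using dP by (metis last_conv_nth dpath_not_Nil)
  ultimately show ?thesis using m by metis
qed

lemma Vlevel_rank_eq:
  assumes j: "j \<le> \<sigma>"
  shows "\<exists>w \<in> Vl j. r w = real j"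
proof -
  have "real j \<in> r ` V" using rank_image j by auto
  then obtain v where v: "v \<in> V" "r v = real j" by auto
  have wf: "wf A" by (rule finite_acyclic_wf[OF finite_A acyclic_arcs])
  obtain w where w: "w \<in> {v \<in> V. r v = real j}" "\<forall>y. (y, w) \<in> A \<longrightarrow> y \<notin> {v \<in> V. r v = real j}"
    using wf v unfolding wf_eq_minimal by (metis (mono_tags, lifting) mem_Collect_eq)
  have "\<forall>p. (p, w) \<in> A \<longrightarrow> r p > real j"
  proof (intro allI impI)
    fix p assume p: "(p, w) \<in> A"
    then have "p \<in> V" using arcs_subset by blast
    then have "r p \<noteq> real j" using w(2) p by blast
    moreover have "r w \<le> r p" using rank_arc[OF p] .
    ultimately show "r p > real j" using w(1) by simp
  qed
  then show ?thesis using w(1) by (auto simp: Vlevel_iff)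
qed

lemma Vlevel_size: "Vl \<sigma> = {\<rho>}"
proof
  show "{\<rho>} \<subseteq> Vl \<sigma>" using root_in_V no_arc_into_root rank_le_size by (auto simp: Vlevel_iff)
  show "Vl \<sigma> \<subseteq> {\<rho>}"
  proof
    fix v assume v: "v \<in> Vl \<sigma>"
    show "v \<in> {\<rho>}"
    proof (rule ccontr)
      assume "v \<notin> {\<rho>}"
      then have "v \<noteq> \<rho>" by simp
      moreover have rv: "(\<rho>, v) \<in> A\<^sup>*" using root_rtrancl v by (simp add: Vlevel_iff)
      have "\<exists>p. (p, v) \<in> A" using rv \<open>v \<noteq> \<rho>\<close> by (induction rule: rtrancl_induct) auto
      then obtain p where p: "(p, v) \<in> A" by blast
      then have "r p > real \<sigma>" using v by (simp add: Vlevel_iff)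
      moreover have "r p \<le> real \<sigma>" using rank_le_size p arcs_subset by blast
      ultimately show False by simp
    qed
  qed
qed

lemma SPS_size: "SP \<sigma> = {(X, {})}"
  unfolding SPS_def Vlevel_size using Sset_root Hset_root by auto

lemma SPS_cases: "P \<in> SP i \<Longrightarrow> \<exists>u \<in> Vl i. P = (S u, H u) \<or> (P = (H u, {}) \<and> H u \<noteq> {})"
  unfolding SPS_def by blast

lemma SPS_pairI: "u \<in> Vl i \<Longrightarrow> (S u, H u) \<in> SP i" unfolding SPS_def by blast

lemma SPS_Hset_pairI: "u \<in> Vl i \<Longrightarrow> H u \<noteq> {} \<Longrightarrow> (H u, {}) \<in> SP i" unfolding SPS_def by blast

lemma SPS_SP1:
  assumes ij: "i < j" and P: "P \<in> SP i"
  shows "\<exists>P2 \<in> SP j. sp_le P P2"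
proof -
  obtain u where u: "u \<in> Vl i" "P = (S u, H u) \<or> (P = (H u, {}) \<and> H u \<noteq> {})" using SPS_cases[OF P] by blast
  obtain w where w: "w \<in> Vl j" "(w, u) \<in> A\<^sup>*" using Vlevel_ancestor[OF u(1) less_imp_le[OF ij]] by blast
  have uV: "u \<in> V" and wV: "w \<in> V" using u w by (auto simp: Vlevel_iff)
  note pl = sp_le_ancestor[OF uV wV w(2)]
  from u(2) show ?thesis
  proof
    assume "P = (S u, H u)"
    then show ?thesis using pl(1) SPS_pairI[OF w(1)] by blast
  next
    assume h: "P = (H u, {}) \<and> H u \<noteq> {}"
    then have "sp_le (H u, {}) (S w, H w) \<or> (H w \<noteq> {} \<and> H u = H w)" using pl(2) by blast
    then show ?thesis
    proof
      assume "sp_le (H u, {}) (S w, H w)"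
      then show ?thesis using h SPS_pairI[OF w(1)] by blast
    next
      assume "H w \<noteq> {} \<and> H u = H w"
      then show ?thesis using h SPS_Hset_pairI[OF w(1)] sp_le_refl by metis
    qed
  qed
qed

lemma Hset_eq_Vlevel_witness:
  assumes w: "w \<in> Vl j" and u: "u \<in> Vl i" and ij: "i < j" and HH: "H u = H w" and Hw: "H w \<noteq> {}"
    and nwu: "(w, u) \<notin> A\<^sup>*"
  shows "\<exists>u' \<in> Vl i. H u' = H w \<and> sp_le (S u', H u') (S w, H w)"
proof -
  have uV: "u \<in> V" and wV: "w \<in> V" using u w by (auto simp: Vlevel_iff)
  have nuw: "(u, w) \<notin> A\<^sup>*"
  proof
    assume "(u, w) \<in> A\<^sup>*"
    then have "r u > real j" using rank_above_Vlevel nwu w by blast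
    then show False using u ij by (simp add: Vlevel_iff)
  qed
  obtain zw where Kw: "merge_point w zw" using merge_point_exists wV by blast
  obtain zu where Ku: "merge_point u zu" using merge_point_exists uV by blast
  have wz: "(w, zw) \<in> A\<^sup>*" and ret: "is_reticulation A zw" using Hset_eq_cluster[OF wV Kw Hw] by auto
  have uz: "(u, zu) \<in> A\<^sup>*" using Hset_eq_cluster[OF uV Ku] HH Hw by auto
  obtain x where "x \<in> H w" using Hw by blast
  then have "(w, \<phi> x) \<in> A\<^sup>*" "(u, \<phi> x) \<in> A\<^sup>*" using HH by (auto simp: Hset_iff)
  then have "zu = zw" using merge_points_eq_if_incomparable[OF uV wV nuw nwu Ku Kw] by blast
  then have rz: "r zw \<le> real i" using rank_rtrancl[OF uz] u by (simp add: Vlevel_iff)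
  show ?thesis
  proof (cases "r w \<le> real i")
    case True
    then have "w \<in> Vl i" using w ij by (auto simp: Vlevel_iff)
    then show ?thesis using sp_le_refl by blast
  next
    case False
    obtain Q where Q: "dpath V A Q" "hd Q = w" "last Q = zw" using rtrancl_dpath[OF wz wV] by blast
    have "\<exists>m < length Q. Q ! m \<in> Vl i" using dpath_meets_Vlevel[OF Q(1)] Q(2,3) rz False by simp
    then obtain m where m: "m < length Q" "Q ! m \<in> Vl i" by blast
    have v: "Q ! m \<in> set Q" "Q ! m \<noteq> zw" using m Vlevel_not_reticulation ret by auto
    have "(w, Q ! m) \<in> A\<^sup>*" using dpath_mem_rtrancl(1)[OF Q(1) v(1)] Q(2) by simp
    then have "sp_le (S (Q ! m), H (Q ! m)) (S w, H w)"
      using sp_le_ancestor(1)[OF _ wV] m(2) by (simp add: Vlevel_iff)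
    then show ?thesis using Hset_eq_on_path_to_merge_point[OF wV Kw Hw Q v] m(2) by blast
  qed
qed

lemma SPS_SP2:
  assumes ij: "i < j" and P2: "(S2, H2) \<in> SP j" and H2: "H2 \<noteq> {}"
    and ex: "\<exists>(S1, H1)\<in>SP i. H1 = H2"
  shows "\<exists>(S1, H1)\<in>SP i. H1 = H2 \<and> sp_le (S1, H1) (S2, H2)"
proof -
  obtain w where w: "w \<in> Vl j" "(S2, H2) = (S w, H w)"
    using SPS_cases[OF P2] H2 by auto
  obtain S1 H1 where P1: "(S1, H1) \<in> SP i" "H1 = H2" using ex by blast
  obtain u where u: "u \<in> Vl i" "(S1, H1) = (S u, H u)"
    using SPS_cases[OF P1(1)] P1(2) H2 by auto
  have uV: "u \<in> V" and wV: "w \<in> V" using u w by (auto simp: Vlevel_iff)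
  have HH: "H u = H w" and Hw: "H w \<noteq> {}" using u w P1 H2 by auto
  show ?thesis
  proof (cases "(w, u) \<in> A\<^sup>*")
    case True
    then have "sp_le (S u, H u) (S w, H w)" using sp_le_ancestor(1)[OF uV wV] by blast
    then show ?thesis using SPS_pairI[OF u(1)] HH w(2) by auto
  next
    case False
    obtain u' where u': "u' \<in> Vl i" "H u' = H w" "sp_le (S u', H u') (S w, H w)"
      using Hset_eq_Vlevel_witness[OF w(1) u(1) ij HH Hw False] by blast
    then show ?thesis using SPS_pairI[OF u'(1)] w(2) by auto
  qed
qed

lemma SPS_neq:
  assumes ij: "i < j" and js: "j \<le> \<sigma>"
  shows "SP i \<noteq> SP j"
proof
  assume eq: "SP i = SP j"
  obtain w where w: "w \<in> Vl j" "r w = real j" using Vlevel_rank_eq[OF js] by blast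
  have "(S w, H w) \<in> SP i" using SPS_pairI[OF w(1)] eq by simp
  then obtain u where u: "u \<in> Vl i" "(S w, H w) = (S u, H u) \<or> (S w, H w) = (H u, {})"
    using SPS_cases by blast
  have uV: "u \<in> V" and wV: "w \<in> V" using u w by (auto simp: Vlevel_iff)
  have nuw: "(u, w) \<notin> A\<^sup>*"
  proof
    assume "(u, w) \<in> A\<^sup>*"
    moreover have "u \<noteq> w" using u w ij by (auto simp: Vlevel_iff)
    ultimately have "r u > real j" using rank_above_Vlevel w(1) by blast
    then show False using u ij by (simp add: Vlevel_iff)
  qed
  have nl: "w \<notin> \<phi> ` X" using rank_label w(2) ij by auto
  have nr: "\<not> is_reticulation A u" "\<not> is_reticulation A w"
    using Vlevel_not_reticulation u(1) w(1) by blast+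
  from u(2) show False
    using Sset_Hset_pair_neq[OF uV wV nuw nr(2) nl] Sset_Hset_pair_neq_Hset_pair[OF uV wV nuw nr] by blast
qed

lemma SPS_less:
  assumes ij: "i < j" and js: "j \<le> \<sigma>"
  shows "sps_less (SP i) (SP j)"
proof -
  have "sps_le (SP i) (SP j)"
    unfolding sps_le_def
  proof (intro conjI ballI)
    show "\<exists>P2\<in>SP j. sp_le P1 P2" if "P1 \<in> SP i" for P1 using SPS_SP1[OF ij that] .
    show "case P2 of (S2, H2) \<Rightarrow> H2 \<noteq> {} \<longrightarrow> (\<exists>(S1, H1)\<in>SP i. H1 = H2) \<longrightarrow>
            (\<exists>(S1, H1)\<in>SP i. H1 = H2 \<and> sp_le (S1, H1) (S2, H2))" if "P2 \<in> SP j" for P2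
      using SPS_SP2[OF ij] that by (cases P2) simp
  qed
  then show ?thesis using SPS_neq[OF ij js] by (simp add: sps_less_def)
qed

end

theorem mainTheorem4:
  fixes X :: "'x set" and V :: "'v set" and A :: "('v \<times> 'v) set" and \<rho> :: 'v
    and \<phi> :: "'x \<Rightarrow> 'v" and r :: "'v \<Rightarrow> real"
  assumes "ranked_cactus X V A \<rho> \<phi> r"
  shows "(\<forall>i j. i < j \<and> j \<le> size_ts V r \<longrightarrow>
            sps_less (SPS X V A \<rho> \<phi> r i) (SPS X V A \<rho> \<phi> r j))
         \<and> SPS X V A \<rho> \<phi> r (size_ts V r) = {(X, {})}"
proof -
  interpret ranked_cactus_graph X V A \<rho> \<phi> r
    using assms by unfold_locales (simp_all add: ranked_cactus_def)
  show ?thesis using SPS_less SPS_size by blast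
qed

end
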